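(* Let $t\in[0,\tilde p]$ and $\rho_t=|(R^{\mathrm{CG}}_t)'(0)|$. Assume the deterministic target vector $\gamma\in\mathbb{R}^p$ satisfies \[ \big\langle \widehat\Sigma_\lambda\exp(-\rho_t\widehat\Sigma_\lambda/2)\beta_\lambda,\ \gamma-\beta_\lambda\big\rangle\ge 0 . \] Then \[ \|\widehat\Sigma_\lambda^{1/2}(\hat\beta^{\mathrm{CG}}_{\lambda,t}-\gamma)\|^2\le 4\,\big\|\widehat\Sigma_\lambda^{1/2}\big(\beta_\lambda-\exp(-\rho_t\widehat\Sigma_\lambda/2)\beta_\lambda-\gamma\big)\big\|^2+4\,\big\|(\rho_t\widehat\Sigma_\lambda\wedge 1)^{1/2}\varepsilon_\lambda\big\|^2, \] where $(\rho_t\widehat\Sigma_\lambda\wedge1)^{1/2}$ denotes $f(\widehat\Sigma_\lambda)$ for $f(x)=(\rho_tx\wedge1)^{1/2}$. Moreover, the condition on $\gamma$ is always satisfied for $\gamma=\beta_{\lambda'}=\widehat\Sigma_{\lambda'}^{-1}\widehat\Sigma\beta_0$ with $\lambda'\in[0,\lambda]$.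
   Context: Linear model $y=X\beta_0+\varepsilon$, $\beta_0=X^+X\beta_0$, $\mathbb{E}[\varepsilon_i|x_i]=0$, $\mathrm{Var}(\varepsilon_i|x_i)=\sigma^2$. Let $\widehat\Sigma=\frac1nX^\top X$, $\widehat\Sigma_\lambda=\widehat\Sigma+\lambda I_p$, $\lambda\ge0$, $y_\lambda=\frac1n\widehat\Sigma_\lambda^{-1/2}X^\top y=\widehat\Sigma_\lambda^{1/2}\beta_\lambda+\varepsilon_\lambda$ with $\beta_\lambda=\widehat\Sigma_\lambda^{-1}\widehat\Sigma\beta_0$, $\varepsilon_\lambda=\frac1n\widehat\Sigma_\lambda^{-1/2}X^\top\varepsilon$. For integer $k$, $R^{\mathrm{CG}}_k$ is the polynomial of degree $k$ with value $1$ at $0$ minimising $\|P_k(\widehat\Sigma_\lambda)y_\lambda\|^2$; for $t=k+\alpha$, $\alpha\in(0,1]$, $R^{\mathrm{CG}}_t=(1-\alpha)R^{\mathrm{CG}}_k+\alpha R^{\mathrm{CG}}_{k+1}$; $\tilde p$ is the number of distinct eigenvalues of $\widehat\Sigma_\lambda$ (assuming $X^\top y$ has nonzero projection on every eigenspace of $\widehat\Sigma$). The interpolated CG estimator (iterates of conjugate gradients for the ridge criterion with penalty $\lambda$) is $\hat\beta^{\mathrm{CG}}_{\lambda,t}=\widehat\Sigma_\lambda^{-1/2}(I_p-R^{\mathrm{CG}}_t(\widehat\Sigma_\lambda))y_\lambda$. *)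

theory Defs
  imports "HOL-Analysis.Analysis" "HOL-Computational_Algebra.Polynomial"
begin

definition mat_fun :: "(real \<Rightarrow> real) \<Rightarrow> real^'n^'n \<Rightarrow> real^'n^'n" where
  "mat_fun f A = (THE B. \<forall>v mu. A *v v = mu *\<^sub>R v \<longrightarrow> B *v v = f mu *\<^sub>R v)"

definition mat_pow :: "real^'n^'n \<Rightarrow> nat \<Rightarrow> real^'n^'n" where
  "mat_pow A k = (((**) A) ^^ k) (mat 1)"

definition mat_poly :: "real poly \<Rightarrow> real^'n^'n \<Rightarrow> real^'n^'n" where
  "mat_poly P A = (\<Sum>i\<le>degree P. coeff P i *\<^sub>R mat_pow A i)"

definition eigenvalues :: "real^'n^'n \<Rightarrow> real set" where
  "eigenvalues A = {mu. \<exists>v. v \<noteq> 0 \<and> A *v v = mu *\<^sub>R v}"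

definition Sig_hat :: "real^'p^'n \<Rightarrow> real^'p^'p" where
  "Sig_hat X = (1 / real CARD('n)) *\<^sub>R (transpose X ** X)"

definition Sig_lam :: "real^'p^'n \<Rightarrow> real \<Rightarrow> real^'p^'p" where
  "Sig_lam X lam = Sig_hat X + lam *\<^sub>R mat 1"

definition beta_lam :: "real^'p^'n \<Rightarrow> real \<Rightarrow> real^'p \<Rightarrow> real^'p" where
  "beta_lam X lam b0 = (matrix_inv (Sig_lam X lam) ** Sig_hat X) *v b0"

text \<open>y_lambda = (1/n) Sigma_lambda^{-1/2} X^T y  (same map gives eps_lambda from eps).\<close>
definition y_lam :: "real^'p^'n \<Rightarrow> real \<Rightarrow> real^'n \<Rightarrow> real^'p" where
  "y_lam X lam y = (1 / real CARD('n)) *\<^sub>R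
      (mat_fun (\<lambda>x. 1 / sqrt x) (Sig_lam X lam) *v (transpose X *v y))"

definition R_CG :: "real^'p^'n \<Rightarrow> real \<Rightarrow> real^'n \<Rightarrow> nat \<Rightarrow> real poly" where
  "R_CG X lam y k = (THE P. degree P \<le> k \<and> poly P 0 = 1 \<and>
      (\<forall>Q. degree Q \<le> k \<and> poly Q 0 = 1 \<longrightarrow>
         norm (mat_poly P (Sig_lam X lam) *v y_lam X lam y)
           \<le> norm (mat_poly Q (Sig_lam X lam) *v y_lam X lam y)))"

text \<open>Interpolated residual polynomial: for t = k + alpha, alpha in (0,1],
  R_t = (1 - alpha) R_k + alpha R_{k+1}; R_0 is the order-0 polynomial.\<close>
definition R_CG_t :: "real^'p^'n \<Rightarrow> real \<Rightarrow> real^'n \<Rightarrow> real \<Rightarrow> real poly" where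
  "R_CG_t X lam y t =
     (if t \<le> 0 then R_CG X lam y 0
      else (let k = nat (\<lceil>t\<rceil> - 1); a = t - real k in
            smult (1 - a) (R_CG X lam y k) + smult a (R_CG X lam y (Suc k))))"

definition beta_CG :: "real^'p^'n \<Rightarrow> real \<Rightarrow> real^'n \<Rightarrow> real \<Rightarrow> real^'p" where
  "beta_CG X lam y t = mat_fun (\<lambda>x. 1 / sqrt x) (Sig_lam X lam) *v
      ((mat 1 - mat_poly (R_CG_t X lam y t) (Sig_lam X lam)) *v y_lam X lam y)"

end

theory Submission
  imports Defs
begin

text \<open>All quantities are functions of the symmetric matrix S = Sigma_lambda, so the inequality
  splits into a sum over the eigenvalues mu of S, weighted by the spectral projections of
  y_lambda. The CG residual polynomials R_k are orthogonal for the discrete measure with weights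
  mu |P_mu y_lambda|^2, hence, like classical orthogonal polynomials, have k distinct positive
  roots; the interpolated polynomial inherits this, R_t(x) = prod (1 - x / z_j), and
  rho_t = sum 1 / z_j. Splitting off the smallest root, R_t = (1 - x / z_1) phi with
  1 - (rho_t - 1 / z_1) x <= phi(x) <= exp (- (rho_t - 1 / z_1) x) below z_1, while
  orthogonality gives sum mu |P_mu y_lambda|^2 R_t(mu) phi(mu) >= 0, which pays for the eigenvalues
  beyond z_1. A positive semidefiniteness estimate for each eigenvalue, summed and combined with
  the condition on gamma via (u + v)^2 <= 4/3 u^2 + 4 v^2, gives the constant 4. For
  gamma = beta_lambda' the condition reads 1 / (mu - lambda + lambda') >= 1 / mu in each
  eigenspace.\<close>

section \<open>Spectral calculus of symmetric matrices\<close>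

lemma linear_coeff_eq_0_if_quadratic_nonneg:
  fixes p q :: real
  assumes "\<And>t. 0 \<le> 2 * t * p + t\<^sup>2 * q"
  shows "p = 0"
proof (rule ccontr)
  assume p0: "p \<noteq> 0"
  define t where "t = - p / (\<bar>q\<bar> + 1)"
  have tq: "\<bar>t * q\<bar> < \<bar>p\<bar>"
  proof -
    have "\<bar>t * q\<bar> = \<bar>p\<bar> * (\<bar>q\<bar> / (\<bar>q\<bar> + 1))" unfolding t_def by (simp add: abs_mult abs_divide)
    also have "\<dots> < \<bar>p\<bar> * 1" using p0 by (intro mult_strict_left_mono) simp_all
    finally show ?thesis by simp
  qed
  have "2 * t * p + t\<^sup>2 * q = t * (2 * p + t * q)" by (simp add: algebra_simps power2_eq_square)
  also have "\<dots> < 0"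
  proof (cases "p > 0")
    case True
    then have "t < 0" unfolding t_def by (simp add: add_pos_nonneg)
    moreover have "2 * p + t * q > 0" using tq True by linarith
    ultimately show ?thesis by (simp add: mult_neg_pos)
  next
    case False
    then have "t > 0" using p0 unfolding t_def by (intro divide_pos_pos) auto
    moreover have "2 * p + t * q < 0" using tq False p0 by linarith
    ultimately show ?thesis by (simp add: mult_pos_neg)
  qed
  finally show False using assms[of t] by simp
qed

lemma matrix_vector_mult_sum:
  fixes M :: "'i \<Rightarrow> real^'n^'m"
  shows "sum M I *v v = (\<Sum>i\<in>I. M i *v v)"
  by (induction I rule: infinite_finite_induct) (auto simp: matrix_vector_mult_add_rdistrib)

lemma poly_interpolation_exists:
  fixes L :: "real set"
  assumes "finite L"
  shows "\<exists>p. \<forall>x\<in>L. poly p x = f x"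
  using assms
proof (induction L rule: finite_induct)
  case empty then show ?case by auto
next
  case (insert a F)
  then obtain p where p: "\<forall>x\<in>F. poly p x = f x" by auto
  define w where "w = (\<Prod>x\<in>F. [:-x, 1:])"
  have wF: "poly w x = 0" if "x \<in> F" for x
    unfolding w_def using that insert(1) by (auto simp: poly_prod)
  have wa: "poly w a \<noteq> 0"
    unfolding w_def using insert(1,2) by (auto simp: poly_prod prod_zero_iff)
  define q where "q = p + smult ((f a - poly p a) / poly w a) w"
  have "poly q a = f a" unfolding q_def using wa by simp
  moreover have "poly q x = f x" if "x \<in> F" for x unfolding q_def using p wF that by simp
  ultimately show ?case by auto
qed

lemma mat_pow_eigenvector:
  fixes A :: "real^'n^'n"
  assumes "A *v v = mu *\<^sub>R v"
  shows "mat_pow A k *v v = (mu ^ k) *\<^sub>R v"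
proof (induction k)
  case 0 then show ?case by (simp add: mat_pow_def)
next
  case (Suc k)
  have "mat_pow A (Suc k) *v v = A *v (mat_pow A k *v v)"
    by (simp add: mat_pow_def matrix_vector_mul_assoc)
  also have "\<dots> = (mu ^ Suc k) *\<^sub>R v" using Suc assms by (simp add: matrix_vector_mult_scaleR)
  finally show ?case .
qed

lemma mat_poly_apply:
  fixes A :: "real^'n^'n"
  assumes "degree Q \<le> N"
  shows "mat_poly Q A *v y = (\<Sum>i\<le>N. coeff Q i *\<^sub>R (mat_pow A i *v y))"
proof -
  have "mat_poly Q A *v y = (\<Sum>i\<le>degree Q. coeff Q i *\<^sub>R (mat_pow A i *v y))"
    unfolding mat_poly_def matrix_vector_mult_sum by (simp add: scaleR_matrix_vector_assoc)
  also have "\<dots> = (\<Sum>i\<le>N. coeff Q i *\<^sub>R (mat_pow A i *v y))"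
    by (rule sum.mono_neutral_left) (use assms in \<open>auto simp: coeff_eq_0\<close>)
  finally show ?thesis .
qed

lemma mat_poly_eigenvector:
  fixes A :: "real^'n^'n"
  assumes "A *v v = mu *\<^sub>R v"
  shows "mat_poly p A *v v = poly p mu *\<^sub>R v"
  by (simp add: mat_poly_apply[OF order.refl] mat_pow_eigenvector[OF assms] poly_altdef
      scaleR_sum_left)

lemma eigenvalueI: "A *v v = mu *\<^sub>R v \<Longrightarrow> v \<noteq> 0 \<Longrightarrow> mu \<in> eigenvalues A"
  unfolding eigenvalues_def by auto

lemma matrix_inv_eqI:
  fixes A B :: "'a::semiring_1^'n^'n"
  assumes AB: "A ** B = mat 1" and BA: "B ** A = mat 1"
  shows "matrix_inv A = B"
proof -
  have inv: "A ** matrix_inv A = mat 1 \<and> matrix_inv A ** A = mat 1"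
    unfolding matrix_inv_def by (rule someI[of _ B]) (use AB BA in simp)
  have "matrix_inv A = matrix_inv A ** (A ** B)" using AB by simp
  also have "\<dots> = B" using inv by (simp add: matrix_mul_assoc)
  finally show ?thesis .
qed

definition eigenproj :: "real^'n^'n \<Rightarrow> real \<Rightarrow> real^'n^'n" where
  "eigenproj A mu = mat_fun (\<lambda>x. if x = mu then 1 else 0) A"

locale sym_matrix =
  fixes A :: "real^'n^'n"
  assumes symmetric: "transpose A = A"
begin

lemma inner_swap: "(A *v x) \<bullet> y = x \<bullet> (A *v y)"
  using dot_lmul_matrix[of x A y] by (simp add: transpose_matrix_vector[symmetric] symmetric)

text \<open>The maximiser of the Rayleigh quotient over the unit sphere of an invariant subspace
  is an eigenvector: perturbing it along the residual A x - M x cannot increase the quotient.\<close>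

lemma eigenvector_in_invariant_subspace:
  assumes U: "subspace U" and inv: "\<And>x. x \<in> U \<Longrightarrow> A *v x \<in> U"
    and ne: "u \<in> U" "u \<noteq> 0"
  obtains v mu where "v \<in> U" "v \<noteq> 0" "A *v v = mu *\<^sub>R v"
proof -
  define K where "K = sphere 0 1 \<inter> U"
  have "compact K" unfolding K_def
    using compact_Int_closed[OF compact_sphere closed_subspace[OF U]] by blast
  moreover have "u /\<^sub>R norm u \<in> K" using ne U unfolding K_def by (simp add: subspace_scale)
  moreover have "continuous_on K (\<lambda>x. x \<bullet> (A *v x))"
    by (intro continuous_intros matrix_vector_mult_linear_continuous_on continuous_on_id)
  ultimately obtain x where xK: "x \<in> K" and xmax: "\<And>y. y \<in> K \<Longrightarrow> y \<bullet> (A *v y) \<le> x \<bullet> (A *v x)"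
    using continuous_attains_sup[of K] by blast
  define M where "M = x \<bullet> (A *v x)"
  have xU: "x \<in> U" and xx: "x \<bullet> x = 1" using xK unfolding K_def by (auto simp: norm_eq_1)
  have rayleigh: "y \<bullet> (A *v y) \<le> M * (y \<bullet> y)" if "y \<in> U" for y
  proof (cases "y = 0")
    case False
    have "y /\<^sub>R norm y \<in> K" using that False U unfolding K_def by (simp add: subspace_scale)
    then have "(y /\<^sub>R norm y) \<bullet> (A *v (y /\<^sub>R norm y)) \<le> M" using xmax unfolding M_def by blast
    moreover have "(y /\<^sub>R norm y) \<bullet> (A *v (y /\<^sub>R norm y)) = (y \<bullet> (A *v y)) / (norm y)\<^sup>2"
      by (simp add: matrix_vector_mult_scaleR power2_eq_square divide_inverse)
    ultimately show ?thesis using False by (simp add: divide_le_eq power2_norm_eq_inner)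
  qed simp
  define h where "h = A *v x - M *\<^sub>R x"
  have hU: "h \<in> U" unfolding h_def using xU inv U by (simp add: subspace_diff subspace_scale)
  have "0 \<le> 2 * t * - (h \<bullet> h) + t\<^sup>2 * - (h \<bullet> (A *v h) - M * (h \<bullet> h))" for t
  proof -
    have "x + t *\<^sub>R h \<in> U" using xU hU U by (simp add: subspace_add subspace_scale)
    from rayleigh[OF this] have
      "(x + t *\<^sub>R h) \<bullet> (A *v (x + t *\<^sub>R h)) \<le> M * ((x + t *\<^sub>R h) \<bullet> (x + t *\<^sub>R h))" .
    moreover have "x \<bullet> (A *v h) = h \<bullet> (A *v x)" by (metis inner_commute inner_swap)
    moreover have "h \<bullet> (A *v x) - M * (h \<bullet> x) = h \<bullet> h"
      unfolding h_def by (simp add: inner_diff_right inner_diff_left algebra_simps)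
    ultimately show ?thesis using xx unfolding M_def
      by (simp add: matrix_vector_right_distrib matrix_vector_mult_scaleR inner_add_left
          inner_add_right inner_commute algebra_simps power2_eq_square)
  qed
  then have "h \<bullet> h = 0" using linear_coeff_eq_0_if_quadratic_nonneg by fastforce
  then have "A *v x = M *\<^sub>R x" unfolding h_def by simp
  moreover have "x \<noteq> 0" using xx by auto
  ultimately show ?thesis using xU that by blast
qed

lemma span_eigenvectors: "span {v. \<exists>mu. A *v v = mu *\<^sub>R v} = UNIV"
proof (rule ccontr)
  let ?E = "{v. \<exists>mu. A *v v = mu *\<^sub>R v}"
  assume "span ?E \<noteq> UNIV"
  then obtain a where a: "a \<noteq> 0" "\<forall>x\<in>span ?E. a \<bullet> x = 0"
    using span_not_UNIV_orthogonal by blast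
  define U where "U = {x. \<forall>v\<in>?E. x \<bullet> v = 0}"
  have "subspace U" unfolding U_def subspace_def by (auto simp: inner_add_left)
  moreover have "A *v x \<in> U" if "x \<in> U" for x
    using that unfolding U_def by (auto simp: inner_swap)
  moreover have "a \<in> U" using a unfolding U_def by (auto intro: span_base)
  ultimately obtain v mu where "v \<in> U" "v \<noteq> 0" "A *v v = mu *\<^sub>R v"
    using eigenvector_in_invariant_subspace a(1) by blast
  then show False unfolding U_def by auto
qed

lemma eigenvectors_orthogonal:
  assumes "A *v u = mu *\<^sub>R u" "A *v v = nu *\<^sub>R v" "mu \<noteq> nu"
  shows "u \<bullet> v = 0"
proof -
  have "mu * (u \<bullet> v) = nu * (u \<bullet> v)" using inner_swap[of u v] assms(1,2) by simp
  with assms(3) show ?thesis by simp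
qed

lemma subspace_contains_eigenvectors:
  assumes "subspace V" and "\<And>v mu. A *v v = mu *\<^sub>R v \<Longrightarrow> v \<in> V"
  shows "V = UNIV"
proof -
  have "span {v. \<exists>mu. A *v v = mu *\<^sub>R v} \<subseteq> V"
    by (rule span_minimal) (use assms in auto)
  then show ?thesis using span_eigenvectors by auto
qed

lemma matrix_eq_on_eigenvectors:
  assumes "\<And>v mu. A *v v = mu *\<^sub>R v \<Longrightarrow> B *v v = C *v v"
  shows "B = C"
proof -
  have "{x. B *v x = C *v x} = UNIV"
  proof (rule subspace_contains_eigenvectors)
    show "subspace {x. B *v x = C *v x}"
      by (simp add: subspace_def matrix_vector_right_distrib matrix_vector_mult_scaleR)
  qed (use assms in blast)
  then show ?thesis by (auto simp: matrix_eq)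
qed

lemma eq_0_if_orthogonal_eigenvectors:
  assumes "\<And>v mu. A *v v = mu *\<^sub>R v \<Longrightarrow> d \<bullet> v = 0"
  shows "d = 0"
proof -
  have "{x. d \<bullet> x = 0} = UNIV"
  proof (rule subspace_contains_eigenvectors)
    show "subspace {x. d \<bullet> x = 0}" by (simp add: subspace_def inner_add_right)
  qed (use assms in blast)
  then have "d \<bullet> d = 0" by blast
  then show ?thesis by simp
qed

lemma finite_eigenvalues: "finite (eigenvalues A)"
proof -
  define V where "V mu = (SOME v. v \<noteq> 0 \<and> A *v v = mu *\<^sub>R v)" for mu
  have V: "V mu \<noteq> 0 \<and> A *v V mu = mu *\<^sub>R V mu" if "mu \<in> eigenvalues A" for mu
    using that someI_ex[of "\<lambda>v. v \<noteq> 0 \<and> A *v v = mu *\<^sub>R v"] unfolding eigenvalues_def V_def by auto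
  have inj: "inj_on V (eigenvalues A)"
  proof (rule inj_onI)
    fix x y assume "x \<in> eigenvalues A" "y \<in> eigenvalues A" "V x = V y"
    then have "x *\<^sub>R V x = y *\<^sub>R V x" "V x \<noteq> 0" using V by metis+
    then show "x = y" by simp
  qed
  have "pairwise orthogonal (V ` eigenvalues A)"
    unfolding pairwise_def orthogonal_def
  proof (clarify)
    fix x y assume "x \<in> eigenvalues A" "y \<in> eigenvalues A" "V x \<noteq> V y"
    then show "V x \<bullet> V y = 0" using V eigenvectors_orthogonal by metis
  qed
  moreover have "0 \<notin> V ` eigenvalues A" using V by auto
  ultimately have "independent (V ` eigenvalues A)" by (rule pairwise_orthogonal_independent)
  then show ?thesis using finiteI_independent finite_imageD[OF _ inj] by blast
qed

lemma mat_fun_eigenvector: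
  assumes "A *v v = mu *\<^sub>R v"
  shows "mat_fun f A *v v = f mu *\<^sub>R v"
proof -
  obtain p where p: "\<forall>x\<in>eigenvalues A. poly p x = f x"
    using poly_interpolation_exists[OF finite_eigenvalues] by blast
  have p_eig: "mat_poly p A *v v = f mu *\<^sub>R v" if "A *v v = mu *\<^sub>R v" for v mu
    using that p mat_poly_eigenvector[OF that] eigenvalueI[OF that] by (cases "v = 0") auto
  have "mat_fun f A = mat_poly p A" unfolding mat_fun_def
  proof (rule the_equality)
    fix C assume "\<forall>v mu. A *v v = mu *\<^sub>R v \<longrightarrow> C *v v = f mu *\<^sub>R v"
    then show "C = mat_poly p A" by (intro matrix_eq_on_eigenvectors) (metis p_eig)
  qed (use p_eig in blast)
  then show ?thesis using p_eig assms by simp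
qed

lemma mat_fun_unique:
  assumes "\<And>v mu. A *v v = mu *\<^sub>R v \<Longrightarrow> B *v v = f mu *\<^sub>R v"
  shows "mat_fun f A = B"
  by (rule matrix_eq_on_eigenvectors) (metis assms mat_fun_eigenvector)

lemma mat_fun_cong:
  assumes "\<And>x. x \<in> eigenvalues A \<Longrightarrow> f x = g x"
  shows "mat_fun f A = mat_fun g A"
proof (rule mat_fun_unique)
  fix v mu assume e: "A *v v = mu *\<^sub>R v"
  show "mat_fun g A *v v = f mu *\<^sub>R v"
    using assms[OF eigenvalueI[OF e]] mat_fun_eigenvector[OF e] by (cases "v = 0") auto
qed

lemma mat_fun_mult: "mat_fun f A ** mat_fun g A = mat_fun (\<lambda>x. f x * g x) A"
proof (rule mat_fun_unique[symmetric])
  fix v mu assume "A *v v = mu *\<^sub>R v"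
  from mat_fun_eigenvector[OF this] show "(mat_fun f A ** mat_fun g A) *v v = (f mu * g mu) *\<^sub>R v"
    by (simp add: matrix_vector_mul_assoc[symmetric] matrix_vector_mult_scaleR)
qed

lemma mat_fun_commute: "mat_fun f A *v (mat_fun g A *v v) = mat_fun g A *v (mat_fun f A *v v)"
  by (metis (no_types, lifting) mat_fun_mult matrix_vector_mul_assoc mult.commute ext)

lemma mat_poly_eq_mat_fun: "mat_poly p A = mat_fun (poly p) A"
  by (rule mat_fun_unique[symmetric]) (simp add: mat_poly_eigenvector)

lemma mat_fun_id: "mat_fun (\<lambda>x. x) A = A"
  by (rule mat_fun_unique) simp

lemma mat_fun_const: "mat_fun (\<lambda>x. c) A = c *\<^sub>R mat 1"
  by (rule mat_fun_unique) (simp add: scaleR_matrix_vector_assoc[symmetric])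

lemma mat_fun_one: "mat_fun (\<lambda>x. 1) A = mat 1"
  using mat_fun_const[of 1] by simp

lemma mat_fun_add: "mat_fun (\<lambda>x. f x + g x) A = mat_fun f A + mat_fun g A"
proof (rule mat_fun_unique)
  fix v mu assume "A *v v = mu *\<^sub>R v"
  from mat_fun_eigenvector[OF this] show "(mat_fun f A + mat_fun g A) *v v = (f mu + g mu) *\<^sub>R v"
    by (simp add: matrix_vector_mult_add_rdistrib scaleR_add_left)
qed

lemma mat_fun_diff: "mat_fun (\<lambda>x. f x - g x) A = mat_fun f A - mat_fun g A"
proof (rule mat_fun_unique)
  fix v mu assume "A *v v = mu *\<^sub>R v"
  from mat_fun_eigenvector[OF this] show "(mat_fun f A - mat_fun g A) *v v = (f mu - g mu) *\<^sub>R v"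
    by (simp add: matrix_vector_mult_diff_rdistrib scaleR_diff_left)
qed

lemma mat_fun_scale: "mat_fun (\<lambda>x. c * f x) A = c *\<^sub>R mat_fun f A"
proof (rule mat_fun_unique)
  fix v mu assume "A *v v = mu *\<^sub>R v"
  from mat_fun_eigenvector[OF this] show "(c *\<^sub>R mat_fun f A) *v v = (c * f mu) *\<^sub>R v"
    by (simp add: scaleR_matrix_vector_assoc[symmetric])
qed

lemma mat_poly_add: "mat_poly (P + Q) A = mat_poly P A + mat_poly Q A"
  unfolding mat_poly_eq_mat_fun poly_add mat_fun_add ..

lemma mat_poly_diff: "mat_poly (P - Q) A = mat_poly P A - mat_poly Q A"
  unfolding mat_poly_eq_mat_fun poly_diff mat_fun_diff ..

lemma mat_poly_smult: "mat_poly (smult c P) A = c *\<^sub>R mat_poly P A"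
  unfolding mat_poly_eq_mat_fun poly_smult mat_fun_scale ..

lemma mat_fun_inverse:
  assumes "\<And>x. x \<in> eigenvalues A \<Longrightarrow> f x \<noteq> 0"
  shows "matrix_inv (mat_fun f A) = mat_fun (\<lambda>x. 1 / f x) A"
proof -
  have "mat_fun f A ** mat_fun (\<lambda>x. 1 / f x) A = mat 1"
    "mat_fun (\<lambda>x. 1 / f x) A ** mat_fun f A = mat 1"
    unfolding mat_fun_mult mat_fun_one[symmetric] by (auto intro: mat_fun_cong simp: assms)
  then show ?thesis by (rule matrix_inv_eqI)
qed

lemma transpose_mat_fun: "transpose (mat_fun f A) = mat_fun f A"
proof (rule matrix_eq_on_eigenvectors)
  fix v nu assume e: "A *v v = nu *\<^sub>R v"
  let ?B = "mat_fun f A"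
  show "transpose ?B *v v = ?B *v v"
  proof (rule eq_iff_diff_eq_0[THEN iffD2], rule eq_0_if_orthogonal_eigenvectors)
    fix u mu assume eu: "A *v u = mu *\<^sub>R u"
    have "(transpose ?B *v v) \<bullet> u = f mu * (v \<bullet> u)"
      using mat_fun_eigenvector[OF eu] by (simp add: transpose_matrix_vector dot_lmul_matrix)
    moreover have "(?B *v v) \<bullet> u = f nu * (v \<bullet> u)" using mat_fun_eigenvector[OF e] by simp
    moreover have "f mu * (v \<bullet> u) = f nu * (v \<bullet> u)"
      using eigenvectors_orthogonal[OF e eu] by (cases "mu = nu") auto
    ultimately show "(transpose ?B *v v - ?B *v v) \<bullet> u = 0" by (simp add: inner_diff_left)
  qed
qed

lemma eigenproj_eigenvector:
  assumes "A *v v = nu *\<^sub>R v"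
  shows "eigenproj A mu *v v = (if nu = mu then v else 0)"
  unfolding eigenproj_def using mat_fun_eigenvector[OF assms] by simp

lemma eigenproj_mat_fun: "eigenproj A mu *v (mat_fun f A *v z) = f mu *\<^sub>R (eigenproj A mu *v z)"
proof -
  have "eigenproj A mu ** mat_fun f A = mat_fun (\<lambda>x. f mu * (if x = mu then 1 else 0)) A"
    unfolding eigenproj_def mat_fun_mult by (rule arg_cong[where f="\<lambda>g. mat_fun g A"]) auto
  then show ?thesis unfolding mat_fun_scale eigenproj_def[symmetric]
    by (simp add: matrix_vector_mul_assoc scaleR_matrix_vector_assoc)
qed

lemma eigenproj_mat_poly: "eigenproj A mu *v (mat_poly P A *v y) = poly P mu *\<^sub>R (eigenproj A mu *v y)"
  unfolding mat_poly_eq_mat_fun by (rule eigenproj_mat_fun)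

lemma eigenproj_matrix: "eigenproj A mu *v (A *v z) = mu *\<^sub>R (eigenproj A mu *v z)"
  using eigenproj_mat_fun[of mu "\<lambda>x. x" z] by (simp add: mat_fun_id)

lemma eigenproj_idem: "eigenproj A mu *v (eigenproj A mu *v z) = eigenproj A mu *v z"
  using eigenproj_mat_fun[of mu "\<lambda>x. if x = mu then 1 else 0" z] by (simp add: eigenproj_def)

lemma eigenproj_inner_swap: "(eigenproj A mu *v x) \<bullet> z = x \<bullet> (eigenproj A mu *v z)"
  by (metis dot_lmul_matrix eigenproj_def transpose_mat_fun transpose_matrix_vector)

lemma sum_eigenproj: "(\<Sum>mu\<in>eigenvalues A. eigenproj A mu *v z) = z"
proof -
  have "(\<Sum>mu\<in>eigenvalues A. eigenproj A mu) = mat 1"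
  proof (rule matrix_eq_on_eigenvectors)
    fix v nu assume e: "A *v v = nu *\<^sub>R v"
    show "(\<Sum>mu\<in>eigenvalues A. eigenproj A mu) *v v = mat 1 *v v"
      using eigenvalueI[OF e] finite_eigenvalues
      by (cases "v = 0") (simp_all add: matrix_vector_mult_sum eigenproj_eigenvector[OF e])
  qed
  then show ?thesis by (metis matrix_vector_mult_sum matrix_vector_mul_lid)
qed

lemma inner_spectral:
  "x \<bullet> z = (\<Sum>mu\<in>eigenvalues A. (eigenproj A mu *v x) \<bullet> (eigenproj A mu *v z))"
proof -
  have "x \<bullet> z = (\<Sum>mu\<in>eigenvalues A. x \<bullet> (eigenproj A mu *v z))"
    by (metis inner_sum_right sum_eigenproj)
  also have "\<dots> = (\<Sum>mu\<in>eigenvalues A. (eigenproj A mu *v x) \<bullet> (eigenproj A mu *v z))"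
    by (metis eigenproj_idem eigenproj_inner_swap)
  finally show ?thesis .
qed

lemma norm_spectral: "(norm z)\<^sup>2 = (\<Sum>mu\<in>eigenvalues A. (norm (eigenproj A mu *v z))\<^sup>2)"
  using inner_spectral[of z z] by (simp add: power2_norm_eq_inner)

lemma norm_mat_fun_spectral:
  "(norm (mat_fun f A *v v))\<^sup>2 = (\<Sum>mu\<in>eigenvalues A. (f mu)\<^sup>2 * (norm (eigenproj A mu *v v))\<^sup>2)"
  unfolding norm_spectral[of "mat_fun f A *v v"] eigenproj_mat_fun by (simp add: power_mult_distrib)

lemma inner_mat_poly_spectral:
  "(mat_poly P A *v y) \<bullet> (mat_poly Q A *v y)
     = (\<Sum>mu\<in>eigenvalues A. poly P mu * poly Q mu * (norm (eigenproj A mu *v y))\<^sup>2)"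
  unfolding inner_spectral[of "mat_poly P A *v y"] eigenproj_mat_poly
  by (simp add: power2_norm_eq_inner mult_ac)

end


section \<open>Polynomials with positive real roots\<close>

definition root_poly :: "real list \<Rightarrow> real poly" where
  "root_poly zs = prod_list (map (\<lambda>z. [:1, -1/z:]) zs)"

definition pos_roots :: "real poly \<Rightarrow> real set" where
  "pos_roots P = {z. z > 0 \<and> poly P z = 0}"

lemma poly_root_poly: "poly (root_poly zs) x = prod_list (map (\<lambda>z. 1 - x/z) zs)"
  unfolding root_poly_def by (induction zs) (auto simp: algebra_simps)

lemma root_poly_Cons: "root_poly (z # zs) = [:1, -1/z:] * root_poly zs"
  unfolding root_poly_def by simp

lemma root_poly_remove1: "z \<in> set zs \<Longrightarrow> root_poly zs = [:1, -1/z:] * root_poly (remove1 z zs)"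
proof (induction zs)
  case Nil then show ?case by simp
next
  case (Cons a zs)
  show ?case
  proof (cases "a = z")
    case True then show ?thesis by (simp add: root_poly_Cons)
  next
    case False
    then have zs: "z \<in> set zs" using Cons by simp
    have r: "remove1 z (a # zs) = a # remove1 z zs" using False by simp
    show ?thesis using Cons.IH[OF zs] unfolding r root_poly_Cons by (simp only: mult.left_commute)
  qed
qed

lemma poly_root_poly_0: "poly (root_poly zs) 0 = 1"
  unfolding poly_root_poly by (induction zs) auto

lemma root_poly_degree_lead_coeff:
  assumes "\<forall>z\<in>set zs. z \<noteq> 0"
  shows "root_poly zs \<noteq> 0 \<and> degree (root_poly zs) = length zs
    \<and> lead_coeff (root_poly zs) = prod_list (map (\<lambda>z. -1/z) zs)"
  using assms
proof (induction zs)
  case Nil then show ?case by (simp add: root_poly_def)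
next
  case (Cons z zs)
  have nz: "[:1, -1/z:] \<noteq> 0" by simp
  have dz: "degree [:1, -1/z:] = 1" using Cons.prems by simp
  from Cons have ih: "root_poly zs \<noteq> 0" "degree (root_poly zs) = length zs"
     "lead_coeff (root_poly zs) = prod_list (map (\<lambda>z. -1/z) zs)" by auto
  have e: "root_poly (z # zs) = [:1, -1/z:] * root_poly zs" by (rule root_poly_Cons)
  have "root_poly (z # zs) \<noteq> 0" unfolding e using ih nz by (simp only: mult_eq_0_iff) simp
  moreover have "degree (root_poly (z # zs)) = length (z # zs)"
    unfolding e using degree_mult_eq[OF nz ih(1)] dz ih(2) by simp
  moreover have "lead_coeff [:1, -1/z:] = -1/z" using dz by simp
  then have "lead_coeff (root_poly (z # zs)) = prod_list (map (\<lambda>z. -1/z) (z # zs))"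
    unfolding e lead_coeff_mult using ih(3) by simp
  ultimately show ?case by blast
qed

lemma degree_root_poly: "\<forall>z\<in>set zs. z > 0 \<Longrightarrow> degree (root_poly zs) = length zs"
  using root_poly_degree_lead_coeff by force

lemma pderiv_root_poly_0: "poly (pderiv (root_poly zs)) 0 = - sum_list (map (\<lambda>z. 1/z) zs)"
proof (induction zs)
  case Nil then show ?case by (simp add: root_poly_def)
next
  case (Cons z zs)
  have "poly (root_poly zs) 0 = 1" by (rule poly_root_poly_0)
  moreover have "pderiv [:1, -1/z:] = [:-1/z:]" by (simp add: pderiv_pCons)
  ultimately show ?case using Cons unfolding root_poly_Cons pderiv_mult poly_add poly_mult by simp
qed

lemma root_poly_pos_on_nonpos:
  assumes "\<forall>z\<in>set zs. z > 0" "x \<le> 0"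
  shows "poly (root_poly zs) x > 0"
  unfolding poly_root_poly using assms
proof (induction zs)
  case (Cons z zs)
  have "1 - x / z > 0" using Cons.prems by (simp add: divide_nonpos_pos add_pos_nonneg)
  then show ?case using Cons by simp
qed simp

lemma lead_coeff_root_poly_same_length:
  fixes xs ys :: "real list"
  assumes "\<forall>z\<in>set xs. z > 0" "\<forall>z\<in>set ys. z > 0" "length xs = length ys"
  shows "prod_list (map (\<lambda>z. -1/z) xs) * prod_list (map (\<lambda>z. -1/z) ys) > 0"
  using assms
proof (induction xs arbitrary: ys)
  case (Cons x xs)
  then obtain y ys' where ys: "ys = y # ys'" by (cases ys) auto
  have "prod_list (map (\<lambda>z. -1/z) xs) * prod_list (map (\<lambda>z. -1/z) ys') > 0"
    using Cons ys by auto
  moreover have "(-1/x) * (-1/y) > 0" using Cons.prems ys by simp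
  ultimately show ?case unfolding ys by (simp add: algebra_simps mult_pos_pos)
qed simp

lemma prod_one_minus_bounds:
  fixes as :: "real list"
  assumes "\<forall>a\<in>set as. 0 \<le> a \<and> a \<le> 1"
  shows "0 \<le> prod_list (map (\<lambda>a. 1 - a) as) \<and> 1 - sum_list as \<le> prod_list (map (\<lambda>a. 1 - a) as)
         \<and> prod_list (map (\<lambda>a. 1 - a) as) \<le> exp (- sum_list as)"
  using assms
proof (induction as)
  case (Cons a as)
  define P where "P = prod_list (map (\<lambda>a. 1 - a) as)"
  define S where "S = sum_list as"
  from Cons have ih: "0 \<le> P" "1 - S \<le> P" "P \<le> exp (- S)" and a: "0 \<le> a" "a \<le> 1"
    and S0: "S \<ge> 0" unfolding P_def S_def by (auto intro: sum_list_nonneg)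
  have "(1 - a) * (1 - S) \<le> (1 - a) * P" using ih(2) a by (simp add: mult_left_mono)
  then have "1 - (a + S) \<le> (1 - a) * P" using a S0 by (simp add: algebra_simps) (smt (verit) mult_nonneg_nonneg)
  moreover have "(1 - a) * P \<le> exp (- a) * exp (- S)"
    using exp_ge_add_one_self[of "-a"] by (intro mult_mono ih(3)) (use ih a in simp_all)
  ultimately show ?case using a ih unfolding P_def S_def by (simp add: exp_add[symmetric])
qed simp

lemma interpolate_root_polys:
  assumes xs: "length xs = k" "\<forall>z\<in>set xs. z > 0" and zs: "length zs = Suc k" "\<forall>z\<in>set zs. z > 0"
    and al: "0 < al" "al \<le> 1"
  defines "P \<equiv> smult (1 - al) (root_poly xs) + smult al (root_poly zs)"
  shows "poly P 0 = 1" "degree P = Suc k" "\<forall>x\<le>0. poly P x \<noteq> 0"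
proof -
  show "poly P 0 = 1" unfolding P_def by (simp add: poly_root_poly_0)
  have "degree (smult (1 - al) (root_poly xs)) < Suc k"
    using degree_smult_le[of "1 - al" "root_poly xs"] degree_root_poly[OF xs(2)] xs(1) by simp
  moreover have "degree (smult al (root_poly zs)) = Suc k" using zs al degree_root_poly by simp
  ultimately show "degree P = Suc k" unfolding P_def by (simp add: degree_add_eq_right)
  show "\<forall>x\<le>0. poly P x \<noteq> 0"
  proof (intro allI impI)
    fix x :: real assume "x \<le> 0"
    then have "poly (root_poly xs) x > 0" "poly (root_poly zs) x > 0"
      using root_poly_pos_on_nonpos xs zs by simp_all
    then have "(1 - al) * poly (root_poly xs) x + al * poly (root_poly zs) x > 0" using al
      by (smt (verit) mult_nonneg_nonneg mult_pos_pos)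
    then show "poly P x \<noteq> 0" unfolding P_def by simp
  qed
qed

lemma finite_pos_roots: "P \<noteq> 0 \<Longrightarrow> finite (pos_roots P)"
  unfolding pos_roots_def by (rule finite_subset[OF _ poly_roots_finite]) auto

lemma poly_factor_out_roots:
  fixes P :: "real poly"
  assumes "P \<noteq> 0" "finite Z"
  shows "\<exists>h. P = (\<Prod>z\<in>Z. [:-z, 1:] ^ order z P) * h \<and> (\<forall>z\<in>Z. poly h z \<noteq> 0)"
  using assms(2)
proof (induction Z rule: finite_induct)
  case empty then show ?case by simp
next
  case (insert a F)
  then obtain h where h: "P = (\<Prod>z\<in>F. [:-z, 1:] ^ order z P) * h" "\<forall>z\<in>F. poly h z \<noteq> 0" by auto
  have h0: "h \<noteq> 0" using h(1) assms(1) by auto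
  obtain h' where h': "h = [:-a, 1:] ^ order a h * h'" "\<not> [:-a, 1:] dvd h'"
    using order_decomp[OF h0] by blast
  have h'a: "poly h' a \<noteq> 0" using h'(2) by (simp add: poly_eq_0_iff_dvd)
  define Q where "Q = (\<Prod>z\<in>F. [:-z, 1:] ^ order z P)"
  have Qa: "poly Q a \<noteq> 0" unfolding Q_def using insert(1,2) by (auto simp: poly_prod prod_zero_iff)
  have "order a P = order a Q + order a h" using h(1) assms(1) unfolding Q_def[symmetric]
    by (simp add: order_mult)
  moreover have "order a Q = 0" using Qa order_root[of Q a] by auto
  ultimately have oa: "order a P = order a h" by simp
  have "(\<Prod>z\<in>insert a F. [:-z, 1:] ^ order z P) = [:-a, 1:] ^ order a P * Q"
    using insert(1,2) unfolding Q_def by simp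
  then have "(\<Prod>z\<in>insert a F. [:-z, 1:] ^ order z P) * h' = Q * ([:-a, 1:] ^ order a h * h')"
    using oa by (simp add: mult_ac)
  also have "\<dots> = Q * h" using h'(1) by simp
  also have "\<dots> = P" using h(1) Q_def by simp
  finally have "P = (\<Prod>z\<in>insert a F. [:-z, 1:] ^ order z P) * h'" by simp
  moreover have "\<forall>z\<in>insert a F. poly h' z \<noteq> 0"
  proof
    fix z assume "z \<in> insert a F"
    then show "poly h' z \<noteq> 0"
    proof
      assume "z = a" then show ?thesis using h'a by simp
    next
      assume "z \<in> F" then have "poly h z \<noteq> 0" using h(2) by auto
      moreover have "poly h z = poly ([:-a, 1:] ^ order a h) z * poly h' z"
        using h'(1) by (metis poly_mult)
      ultimately show ?thesis by auto
    qed
  qed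
  ultimately show ?case by blast
qed

lemma pos_roots_factorization:
  fixes P :: "real poly"
  assumes "P \<noteq> 0"
  obtains h where "P = (\<Prod>z\<in>pos_roots P. [:-z, 1:] ^ order z P) * h" "\<And>x. x > 0 \<Longrightarrow> poly h x \<noteq> 0"
proof -
  obtain h where h: "P = (\<Prod>z\<in>pos_roots P. [:-z, 1:] ^ order z P) * h"
    "\<forall>z\<in>pos_roots P. poly h z \<noteq> 0"
    using poly_factor_out_roots[OF assms finite_pos_roots[OF assms]] by blast
  have "poly h x \<noteq> 0" if "x > 0" for x
  proof
    assume hx: "poly h x = 0"
    have "poly P x = 0" by (subst h(1)) (simp add: hx)
    then have "x \<in> pos_roots P" using that by (simp add: pos_roots_def)
    then show False using h(2) hx by auto
  qed
  with h(1) show ?thesis using that by blast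
qed

lemma poly_same_sign_if_no_pos_roots:
  fixes h :: "real poly"
  assumes no_root: "\<And>x. x > 0 \<Longrightarrow> poly h x \<noteq> 0" and "x > 0" "y > 0"
  shows "poly h x * poly h y > 0"
proof (rule ccontr)
  assume "\<not> poly h x * poly h y > 0"
  then have neg: "poly h x * poly h y < 0"
    using no_root[of x] no_root[of y] assms(2,3) by (metis linorder_neqE_linordered_idom mult_eq_0_iff)
  consider "x < y" | "y < x" | "x = y" by linarith
  then show False
  proof cases
    case 1
    with poly_IVT[OF 1 neg] show False using assms(2) no_root by force
  next
    case 2
    with poly_IVT[OF 2, of h] neg show False using assms(3) no_root by (force simp: mult.commute)
  qed (use neg in \<open>simp add: mult_less_0_iff\<close>)
qed

text \<open>Multiplying by the positive roots of odd multiplicity makes a polynomial sign-definite on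
  the positive reals.\<close>

lemma pos_roots_sign_fixing_poly:
  fixes P :: "real poly"
  assumes "P \<noteq> 0"
  obtains q where "degree q \<le> card (pos_roots P)" "\<And>x. x > 0 \<Longrightarrow> poly P x * poly q x \<ge> 0"
    "\<And>x. poly q x = 0 \<Longrightarrow> x \<in> pos_roots P"
proof -
  define Z where "Z = pos_roots P"
  obtain h where h: "P = (\<Prod>z\<in>Z. [:-z, 1:] ^ order z P) * h" "\<And>x. x > 0 \<Longrightarrow> poly h x \<noteq> 0"
    using pos_roots_factorization[OF assms] unfolding Z_def by blast
  define e where "e z = (if odd (order z P) then 1 else (0::nat))" for z
  define q where "q = smult (poly h 1) (\<Prod>z\<in>Z. [:-z, 1:] ^ e z)"
  have "degree q \<le> (\<Sum>z\<in>Z. e z)" unfolding q_def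
    by (rule order.trans[OF degree_smult_le], subst degree_prod_sum_eq) (auto simp: degree_power_eq)
  also have "\<dots> \<le> card Z" using sum_mono[of Z e "\<lambda>_. 1"] by (simp add: e_def)
  finally have "degree q \<le> card Z" .
  moreover have "poly P x * poly q x \<ge> 0" if x: "x > 0" for x
  proof -
    have "poly P x * poly q x = (\<Prod>z\<in>Z. (x - z) ^ (order z P + e z)) * (poly h 1 * poly h x)"
      by (subst h(1)) (simp add: q_def poly_prod power_add prod.distrib mult_ac)
    moreover have "even (order z P + e z)" for z by (simp add: e_def)
    then have "(\<Prod>z\<in>Z. (x - z) ^ (order z P + e z)) \<ge> 0" by (simp add: prod_nonneg zero_le_even_power)
    ultimately show ?thesis
      using poly_same_sign_if_no_pos_roots[OF h(2) _ x, of 1] by simp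
  qed
  moreover have "x \<in> Z" if "poly q x = 0" for x
  proof -
    have "poly h 1 \<noteq> 0" using h(2) by simp
    then show ?thesis
      using that finite_pos_roots[OF assms] by (auto simp: q_def poly_prod prod_zero_iff Z_def)
  qed
  ultimately show ?thesis using that unfolding Z_def by blast
qed

text \<open>The sign-change argument for orthogonal polynomials: with fewer than k positive roots, P
  could be paired with its sign-fixing polynomial, of degree below k, to give a vanishing sum of
  nonnegative terms, making every point of L a positive root of P.\<close>

lemma card_pos_roots_ge_if_orthogonal:
  fixes P :: "real poly" and L :: "real set"
  assumes fin: "finite L" and pos: "\<And>mu. mu \<in> L \<Longrightarrow> mu > 0 \<and> w mu > 0" and "P \<noteq> 0"
    and orth: "\<And>q. degree q < k \<Longrightarrow> (\<Sum>mu\<in>L. w mu * mu * poly P mu * poly q mu) = 0"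
    and "k \<le> card L"
  shows "k \<le> card (pos_roots P)"
proof (rule ccontr)
  assume "\<not> k \<le> card (pos_roots P)"
  obtain q where q: "degree q \<le> card (pos_roots P)" "\<And>x. x > 0 \<Longrightarrow> poly P x * poly q x \<ge> 0"
    "\<And>x. poly q x = 0 \<Longrightarrow> x \<in> pos_roots P"
    using pos_roots_sign_fixing_poly[OF \<open>P \<noteq> 0\<close>] by blast
  have "(\<Sum>mu\<in>L. w mu * mu * poly P mu * poly q mu) = 0"
    using orth q(1) \<open>\<not> k \<le> card (pos_roots P)\<close> by simp
  moreover have "\<forall>mu\<in>L. w mu * mu * poly P mu * poly q mu \<ge> 0"
    using pos q(2) by (simp add: mult.assoc mult_pos_pos mult_nonneg_nonneg less_imp_le)
  ultimately have zero: "w mu * mu * poly P mu * poly q mu = 0" if "mu \<in> L" for mu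
    using sum_nonneg_eq_0_iff[OF fin, of "\<lambda>mu. w mu * mu * poly P mu * poly q mu"] that by simp
  have "L \<subseteq> pos_roots P"
  proof
    fix mu assume mu: "mu \<in> L"
    then have "mu > 0" "w mu \<noteq> 0" using pos by force+
    then have "poly P mu = 0 \<or> poly q mu = 0" using zero[OF mu] by simp
    then show "mu \<in> pos_roots P" using q(3) \<open>mu > 0\<close> by (auto simp: pos_roots_def)
  qed
  then have "card L \<le> card (pos_roots P)"
    using finite_pos_roots[OF \<open>P \<noteq> 0\<close>] by (rule card_mono[rotated])
  then show False using \<open>\<not> k \<le> card (pos_roots P)\<close> \<open>k \<le> card L\<close> by simp
qed

lemma root_poly_of_factorization:
  fixes P :: "real poly"
  assumes "finite Z" "\<forall>z\<in>Z. z > 0" and P0: "poly P 0 = 1"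
    and P: "P = smult c (\<Prod>z\<in>Z. [:-z, 1:] ^ m z)"
  obtains zs where "\<forall>z\<in>set zs. z > 0" "P = root_poly zs"
proof -
  obtain xs where xs: "distinct xs" "set xs = Z" using finite_distinct_list[OF assms(1)] by blast
  define zs where "zs = concat (map (\<lambda>z. replicate (m z) z) xs)"
  have zs_pos: "\<forall>z\<in>set zs. z > 0" unfolding zs_def using xs(2) assms(2) by auto
  have prod_zs: "prod_list (map f zs) = (\<Prod>z\<in>Z. f z ^ m z)" for f :: "real \<Rightarrow> real"
  proof -
    have "prod_list (map f zs) = prod_list (map (\<lambda>z. f z ^ m z) xs)"
      unfolding zs_def by (induction xs) (auto simp: prod_list_replicate)
    also have "\<dots> = (\<Prod>z\<in>Z. f z ^ m z)"
      using prod.distinct_set_conv_list[OF xs(1), of "\<lambda>z. f z ^ m z"] xs(2) by simp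
    finally show ?thesis .
  qed
  have split: "prod_list (map (\<lambda>z. x - z) zs)
      = prod_list (map (\<lambda>z. 1 - x/z) zs) * prod_list (map (\<lambda>z. -z) zs)" for x
    using zs_pos by (induction zs) (auto simp: field_simps)
  have poly_P: "poly P x = c * prod_list (map (\<lambda>z. x - z) zs)" for x
    unfolding P prod_zs by (simp add: poly_prod)
  have "c * prod_list (map (\<lambda>z. -z) zs) = 1" using poly_P[of 0] P0 by simp
  then have "poly P x = poly (root_poly zs) x" for x
    unfolding poly_P poly_root_poly split by (simp add: mult_ac)
  then have "P = root_poly zs" using poly_eq_poly_eq_iff by blast
  with zs_pos that show ?thesis by blast
qed

lemma root_poly_if_enough_pos_roots:
  fixes P :: "real poly"
  assumes P0: "poly P 0 = 1"
    and deg: "degree P \<le> card (pos_roots P) \<or>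
       (degree P \<le> card (pos_roots P) + 1 \<and> (\<forall>x\<le>0. poly P x \<noteq> 0))"
  obtains zs where "\<forall>z\<in>set zs. z > 0" "P = root_poly zs"
proof -
  define Z where "Z = pos_roots P"
  define Q where "Q = (\<Prod>z\<in>Z. [:-z, 1:] ^ order z P)"
  have "P \<noteq> 0" using P0 by auto
  then obtain h where P: "P = Q * h" and h: "\<And>x. x > 0 \<Longrightarrow> poly h x \<noteq> 0"
    using pos_roots_factorization unfolding Q_def Z_def by blast
  have fZ: "finite Z" unfolding Z_def using finite_pos_roots[OF \<open>P \<noteq> 0\<close>] .
  have "Q \<noteq> 0" "h \<noteq> 0" using P \<open>P \<noteq> 0\<close> by auto
  have "1 \<le> order z P" if "z \<in> Z" for z
    using that \<open>P \<noteq> 0\<close> order_root[of P z] by (simp add: Z_def pos_roots_def)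
  then have "card Z \<le> (\<Sum>z\<in>Z. order z P)" using sum_mono[of Z "\<lambda>_. 1::nat"] by fastforce
  also have "\<dots> = degree Q" unfolding Q_def
    by (subst degree_prod_sum_eq) (auto simp: degree_power_eq)
  finally have dQ: "card Z \<le> degree Q" .
  have dP: "degree P = degree Q + degree h" using P degree_mult_eq \<open>Q \<noteq> 0\<close> \<open>h \<noteq> 0\<close> by simp
  have "degree h = 0"
  proof (rule ccontr)
    assume "degree h \<noteq> 0"
    with deg dP dQ have d1: "degree h = 1" and np: "\<forall>x\<le>0. poly P x \<noteq> 0"
      unfolding Z_def by auto
    define r where "r = - coeff h 0 / coeff h 1"
    have "coeff h 1 \<noteq> 0" using d1 \<open>h \<noteq> 0\<close> by (metis leading_coeff_0_iff)
    then have hr: "poly h r = 0" using d1 unfolding r_def by (simp add: poly_altdef)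
    then have "r \<le> 0" using h[of r] by (meson not_le)
    then show False using np hr P by simp
  qed
  then obtain c where "h = [:c:]" by (rule degree_eq_zeroE)
  then have "P = smult c Q" using P by simp
  moreover have "\<forall>z\<in>Z. z > 0" unfolding Z_def pos_roots_def by simp
  ultimately obtain zs where "\<forall>z\<in>set zs. z > 0" "P = root_poly zs"
    using root_poly_of_factorization[OF fZ _ P0] unfolding Q_def by metis
  with that show ?thesis by blast
qed


section \<open>Scalar estimates for a single eigenvalue\<close>

lemma psd_2x2_pairing_nonneg:
  fixes A B C Daa Dae Dee :: real
  assumes A: "A \<ge> 0" and C: "C \<ge> 0" and B: "B\<^sup>2 \<le> A * C" and Da: "Daa \<ge> 0" and De: "Dee \<ge> 0"
    and D: "Dae\<^sup>2 \<le> Daa * Dee"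
  shows "Daa * A + 2 * Dae * B + Dee * C \<ge> 0"
proof -
  have P: "Daa * A \<ge> 0" and Q: "Dee * C \<ge> 0" using A C Da De by auto
  have "(Dae * B)\<^sup>2 = Dae\<^sup>2 * B\<^sup>2" by (simp add: power_mult_distrib)
  also have "\<dots> \<le> (Daa * Dee) * (A * C)"
    by (rule mult_mono[OF D B]) (use Da De in auto)
  also have "\<dots> = (Daa * A) * (Dee * C)" by (simp add: mult_ac)
  finally have sq: "(Dae * B)\<^sup>2 \<le> (Daa * A) * (Dee * C)" .
  have "\<bar>Dae * B\<bar> = sqrt ((Dae * B)\<^sup>2)" by simp
  also have "\<dots> \<le> sqrt ((Daa * A) * (Dee * C))" using sq by (rule real_sqrt_le_mono)
  also have "\<dots> = sqrt (Daa * A) * sqrt (Dee * C)" by (simp add: real_sqrt_mult)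
  finally have ab: "\<bar>Dae * B\<bar> \<le> sqrt (Daa * A) * sqrt (Dee * C)" .
  have "0 \<le> (sqrt (Daa * A) - sqrt (Dee * C))\<^sup>2" by simp
  then have "2 * (sqrt (Daa * A) * sqrt (Dee * C)) \<le> (sqrt (Daa * A))\<^sup>2 + (sqrt (Dee * C))\<^sup>2"
    unfolding power2_diff by linarith
  also have "\<dots> = Daa * A + Dee * C" using P Q by simp
  finally have "2 * \<bar>Dae * B\<bar> \<le> Daa * A + Dee * C" using ab by linarith
  moreover have "- (Dae * B) \<le> \<bar>Dae * B\<bar>" by simp
  moreover have "2 * Dae * B = 2 * (Dae * B)" by simp
  ultimately show ?thesis by linarith
qed

lemma norm_scaleR_add_squared:
  fixes a e :: "'a::real_inner"
  shows "(norm (x *\<^sub>R a + y *\<^sub>R e))\<^sup>2 = x\<^sup>2 * (a \<bullet> a) + 2 * x * y * (a \<bullet> e) + y\<^sup>2 * (e \<bullet> e)"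
  unfolding power2_norm_eq_inner
  by (simp add: inner_add_left inner_add_right inner_commute power2_eq_square algebra_simps)

lemma norm_add_squared_le:
  fixes w d :: "'a::real_inner"
  shows "(norm (w + d))\<^sup>2 \<le> 4/3 * (norm w)\<^sup>2 + 4 * (norm d)\<^sup>2"
proof -
  have "0 \<le> (norm ((1/3) *\<^sub>R w - d))\<^sup>2" by simp
  also have "\<dots> = 1/9 * (norm w)\<^sup>2 - 2/3 * (w \<bullet> d) + (norm d)\<^sup>2"
    by (simp add: power2_norm_eq_inner inner_diff_left inner_diff_right inner_commute algebra_simps)
  finally show ?thesis
    by (simp add: power2_norm_eq_inner inner_add_left inner_add_right inner_commute)
qed

text \<open>At an eigenvalue mu, s = mu / z for the smallest root z of the residual polynomial,
  c = rho mu with rho the sum of all reciprocal roots, and phi is the value at mu of the factors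
  belonging to the other roots.\<close>

definition admissible_residual_factor :: "real \<Rightarrow> real \<Rightarrow> real \<Rightarrow> bool" where
  "admissible_residual_factor s c phi \<longleftrightarrow> 0 \<le> s \<and> s \<le> c \<and>
     (s < 1 \<longrightarrow> 0 \<le> phi \<and> 1 - (c - s) \<le> phi \<and> phi \<le> exp (- (c - s))) \<and> (1 \<le> s \<longrightarrow> 1 \<le> c)"

lemma residual_factor_estimates:
  fixes s b phi :: real
  assumes s: "0 \<le> s" "s < 1" and b: "0 \<le> b"
    and phi: "0 \<le> phi" "1 - b \<le> phi" "phi \<le> exp (- b)"
  defines "r \<equiv> (1 - s) * phi"
  shows "phi \<le> 1" "0 \<le> r" "r \<le> 1 - s" "r \<le> exp (- (s + b))" "1 - r \<le> min (s + b) 1"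
    "s \<le> min (s + b) 1"
proof -
  show ph1: "phi \<le> 1" using phi(3) b by (smt (verit) exp_le_one_iff)
  show "0 \<le> r" unfolding r_def using s phi by simp
  show "r \<le> 1 - s" unfolding r_def using s ph1 by (simp add: mult_left_le)
  have "r \<le> exp (- s) * exp (- b)" unfolding r_def
    using exp_ge_add_one_self[of "- s"] by (intro mult_mono phi(3)) (use s phi in auto)
  then show "r \<le> exp (- (s + b))" by (simp add: exp_add[symmetric])
  have "(1 - s) * (1 - b) \<le> r" unfolding r_def using s phi by (simp add: mult_left_mono)
  then have "1 - r \<le> s + b" using mult_nonneg_nonneg[OF s(1) b] by (simp add: algebra_simps)
  then show "1 - r \<le> min (s + b) 1" using \<open>0 \<le> r\<close> by simp
  show "s \<le> min (s + b) 1" using s b by simp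
qed

lemma residual_factor_cross_term:
  fixes s r phi E m :: real
  assumes s: "0 \<le> s" "s < 1" and phi: "0 \<le> phi" "phi \<le> 1"
    and r: "0 \<le> r" "r \<le> 1 - s" "r \<le> E" "1 - r \<le> m" and E: "E \<le> 1" and m: "m \<le> 1" "s \<le> m"
  shows "(r * (1 - r) - 2 * s * r * phi)\<^sup>2 \<le> ((2 - s) * E) * (m * (2 - r))"
proof -
  define X where "X = r * (1 - r)"
  define K where "K = 2 * s * r * phi"
  have m0: "0 \<le> m" and E0: "0 \<le> E" using r s m by linarith+
  have "1 * 1 \<le> (2 - s) * (2 - r)" by (rule mult_mono) (use s r in auto)
  then have big: "E * m \<le> E * m * ((2 - s) * (2 - r))"
    using mult_left_mono[of 1 "(2 - s) * (2 - r)" "E * m"] E0 m0 by simp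
  have "(X - K)\<^sup>2 \<le> max (X\<^sup>2) (K\<^sup>2)"
    unfolding X_def K_def using s r phi
    by (smt (verit) mult_nonneg_nonneg power_mono power2_commute max.cobounded1 max.cobounded2)
  moreover have "X\<^sup>2 \<le> E * m * ((2 - s) * (2 - r))"
  proof -
    have "X\<^sup>2 \<le> E\<^sup>2 * m\<^sup>2" unfolding X_def power_mult_distrib
      by (intro mult_mono power_mono) (use r s in auto)
    also have "\<dots> = (E * m) * (E * m)" by (simp add: power2_eq_square)
    also have "\<dots> \<le> E * m"
      using mult_left_le[of "E * m" "E * m"] mult_mono[OF E m(1)] E0 m0 by simp
    finally show ?thesis using big by linarith
  qed
  moreover have "K\<^sup>2 \<le> E * m * ((2 - s) * (2 - r))"
  proof -
    have "K\<^sup>2 = (4 * s * r) * (s * r) * phi\<^sup>2" unfolding K_def by (simp add: power2_eq_square mult_ac)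
    also have "\<dots> \<le> (4 * s * r) * (m * E) * 1"
      using s r m phi by (intro mult_mono) (auto simp: power_le_one mult_mono)
    also have "4 * s * r \<le> (2 - s) * (2 - r)"
    proof -
      have "4 * s * r \<le> 4 * s * (1 - s)" using r s by (simp add: mult_left_mono)
      also have "\<dots> \<le> 1" using sum_squares_bound[of "2 * s" 1] by (simp add: algebra_simps power2_eq_square)
      finally show ?thesis using \<open>1 * 1 \<le> (2 - s) * (2 - r)\<close> by linarith
    qed
    then have "(E * m) * (4 * s * r) \<le> (E * m) * ((2 - s) * (2 - r))"
      using E0 m0 by (intro mult_left_mono) simp_all
    then have "(4 * s * r) * (m * E) * 1 \<le> E * m * ((2 - s) * (2 - r))" by (simp add: mult_ac)
    finally show ?thesis .
  qed
  ultimately show ?thesis unfolding X_def K_def by (simp add: mult_ac)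
qed

lemma residual_factor_psd:
  fixes s b phi :: real
  assumes s: "0 \<le> s" "s < 1" and b: "0 \<le> b"
    and phi: "0 \<le> phi" "1 - b \<le> phi" "phi \<le> exp (- b)"
  defines "r \<equiv> (1 - s) * phi" and "c \<equiv> s + b"
  defines "K \<equiv> 2 * s * r * phi" and "m \<equiv> min c 1"
  shows "3 * exp (- c) - r\<^sup>2 - K \<ge> 0"
    and "3 * m - (1 - r)\<^sup>2 - K \<ge> 0"
    and "(r * (1 - r) - K)\<^sup>2 \<le> (3 * exp (- c) - r\<^sup>2 - K) * (3 * m - (1 - r)\<^sup>2 - K)"
proof -
  note bd = residual_factor_estimates[OF assms(1-6), folded r_def c_def m_def]
  have "r\<^sup>2 + K = r * ((1 + s) * phi)" unfolding K_def r_def by (simp add: algebra_simps power2_eq_square)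
  also have "\<dots> \<le> exp (- c) * (1 + s)"
    using bd s phi by (intro mult_mono) (auto simp: mult_left_le)
  finally have Daa: "(2 - s) * exp (- c) \<le> 3 * exp (- c) - r\<^sup>2 - K" by (simp add: algebra_simps)
  then show Daa0: "3 * exp (- c) - r\<^sup>2 - K \<ge> 0"
    using s by (smt (verit) exp_gt_zero mult_nonneg_nonneg)
  have "(1 - r)\<^sup>2 \<le> m * (1 - r)" unfolding power2_eq_square using bd s by (intro mult_right_mono) auto
  moreover have "K \<le> 2 * m * r"
  proof -
    have "K = 2 * s * (r * phi)" unfolding K_def by (simp add: mult_ac)
    also have "\<dots> \<le> 2 * m * r" using bd s phi by (intro mult_mono) (auto simp: mult_left_le)
    finally show ?thesis .
  qed
  ultimately have Dee: "m * (2 - r) \<le> 3 * m - (1 - r)\<^sup>2 - K" by (simp add: algebra_simps)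
  moreover have "m * (2 - r) \<ge> 0" using bd s by (simp add: m_def c_def b)
  ultimately show Dee0: "3 * m - (1 - r)\<^sup>2 - K \<ge> 0" by linarith
  have "(r * (1 - r) - K)\<^sup>2 \<le> ((2 - s) * exp (- c)) * (m * (2 - r))"
    unfolding K_def c_def m_def
    using residual_factor_cross_term[of s phi r "exp (- (s + b))" "min (s + b) 1"] bd s phi
    by (simp add: c_def m_def)
  also have "\<dots> \<le> (3 * exp (- c) - r\<^sup>2 - K) * (3 * m - (1 - r)\<^sup>2 - K)"
    using Daa Dee \<open>m * (2 - r) \<ge> 0\<close> Daa0 by (intro mult_mono) simp_all
  finally show "(r * (1 - r) - K)\<^sup>2 \<le> (3 * exp (- c) - r\<^sup>2 - K) * (3 * m - (1 - r)\<^sup>2 - K)" .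
qed

lemma component_bound_below_first_root:
  fixes a e :: "'a::real_inner" and s c phi :: real
  assumes s: "0 \<le> s" "s < 1" "s \<le> c"
    and phi: "0 \<le> phi" "1 - (c - s) \<le> phi" "phi \<le> exp (- (c - s))"
  shows "(norm (((1 - s) * phi) *\<^sub>R (a + e) - e))\<^sup>2 + 2 * s * (1 - s) * phi\<^sup>2 * (norm (a + e))\<^sup>2
         \<le> 3 * exp (- c) * (norm a)\<^sup>2 + 3 * min c 1 * (norm e)\<^sup>2"
proof -
  define r where "r = (1 - s) * phi"
  define K where "K = 2 * s * r * phi"
  define A B C where "A = a \<bullet> a" and "B = a \<bullet> e" and "C = e \<bullet> e"
  define E m where "E = exp (- c)" and "m = min c 1"
  have "c = s + (c - s)" by simp
  note psd = residual_factor_psd[of s "c - s" phi, OF s(1,2) _ phi, folded r_def this, folded K_def]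
  have "r *\<^sub>R (a + e) - e = r *\<^sub>R a + (r - 1) *\<^sub>R e" by (simp add: algebra_simps)
  then have N1: "(norm (r *\<^sub>R (a + e) - e))\<^sup>2 = r\<^sup>2 * A + 2 * r * (r - 1) * B + (r - 1)\<^sup>2 * C"
    unfolding A_def B_def C_def by (simp only: norm_scaleR_add_squared)
  have N2: "(norm (a + e))\<^sup>2 = A + 2 * B + C"
    using norm_scaleR_add_squared[of 1 a 1 e] unfolding A_def B_def C_def by simp
  have KK: "2 * s * (1 - s) * phi\<^sup>2 = K" unfolding K_def r_def by (simp add: power2_eq_square mult_ac)
  have "0 \<le> (3 * E - r\<^sup>2 - K) * A + 2 * (r * (1 - r) - K) * B + (3 * m - (1 - r)\<^sup>2 - K) * C"
    unfolding A_def B_def C_def E_def m_def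
    using s psd by (intro psd_2x2_pairing_nonneg Cauchy_Schwarz_ineq) simp_all
  moreover have "(3 * E - r\<^sup>2 - K) * A + 2 * (r * (1 - r) - K) * B + (3 * m - (1 - r)\<^sup>2 - K) * C
      = 3 * E * A + 3 * m * C - ((r\<^sup>2 * A + 2 * r * (r - 1) * B + (r - 1)\<^sup>2 * C) + K * (A + 2 * B + C))"
    by (simp add: algebra_simps power2_eq_square)
  moreover have "(norm a)\<^sup>2 = A" "(norm e)\<^sup>2 = C"
    unfolding A_def C_def by (simp_all add: power2_norm_eq_inner)
  ultimately show ?thesis unfolding r_def[symmetric] N1 N2 KK E_def[symmetric] m_def[symmetric]
    by (metis diff_ge_0_iff_ge)
qed

lemma component_bound_beyond_first_root:
  fixes a e :: "'a::real_inner" and s c phi :: real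
  assumes "1 \<le> s" "1 \<le> c"
  shows "(norm (((1 - s) * phi) *\<^sub>R (a + e) - e))\<^sup>2 + 2 * s * (1 - s) * phi\<^sup>2 * (norm (a + e))\<^sup>2
         \<le> 3 * exp (- c) * (norm a)\<^sup>2 + 3 * min c 1 * (norm e)\<^sup>2"
proof -
  define p where "p = (s - 1) * phi"
  have "(s - 1) * (s - 1) * phi\<^sup>2 \<le> s * (s - 1) * phi\<^sup>2"
    using assms(1) by (intro mult_right_mono) simp_all
  then have "2 * s * (1 - s) * phi\<^sup>2 \<le> - 2 * p\<^sup>2"
    unfolding p_def by (simp add: algebra_simps power2_eq_square)
  then have "2 * s * (1 - s) * phi\<^sup>2 * (norm (a + e))\<^sup>2 \<le> - 2 * (p\<^sup>2 * (norm (a + e))\<^sup>2)"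
    using mult_right_mono[OF _ zero_le_power2[of "norm (a + e)"]] by fastforce
  moreover have "((1 - s) * phi) *\<^sub>R (a + e) - e = - (p *\<^sub>R (a + e) + e)"
    unfolding p_def by (simp add: algebra_simps)
  then have "(norm (((1 - s) * phi) *\<^sub>R (a + e) - e))\<^sup>2 = (norm (p *\<^sub>R (a + e) + e))\<^sup>2"
    by (simp only: norm_minus_cancel)
  moreover have "(norm (p *\<^sub>R (a + e) + e))\<^sup>2 \<le> 2 * (norm (p *\<^sub>R (a + e)))\<^sup>2 + 2 * (norm e)\<^sup>2"
  proof -
    have "(norm (p *\<^sub>R (a + e) + e))\<^sup>2 + (norm (p *\<^sub>R (a + e) - e))\<^sup>2
        = 2 * (norm (p *\<^sub>R (a + e)))\<^sup>2 + 2 * (norm e)\<^sup>2"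
      unfolding power2_norm_eq_inner
      by (simp add: inner_add_left inner_add_right inner_diff_left inner_diff_right inner_commute)
    then show ?thesis by (smt (verit) zero_le_power2)
  qed
  moreover have "(norm (p *\<^sub>R (a + e)))\<^sup>2 = p\<^sup>2 * (norm (a + e))\<^sup>2"
    by (simp add: power_mult_distrib)
  moreover have "0 \<le> 3 * exp (- c) * (norm a)\<^sup>2" by simp
  moreover have "3 * min c 1 * (norm e)\<^sup>2 = 3 * (norm e)\<^sup>2" using assms(2) by simp
  moreover have "0 \<le> (norm e)\<^sup>2" by simp
  ultimately show ?thesis by linarith
qed

lemma component_bound:
  fixes a e :: "'a::real_inner" and s c phi :: real
  assumes "admissible_residual_factor s c phi"
  shows "(norm (((1 - s) * phi) *\<^sub>R (a + e) - e))\<^sup>2 + 2 * s * (1 - s) * phi\<^sup>2 * (norm (a + e))\<^sup>2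
         \<le> 3 * exp (- c) * (norm a)\<^sup>2 + 3 * min c 1 * (norm e)\<^sup>2"
proof (cases "s < 1")
  case True
  with assms show ?thesis
    unfolding admissible_residual_factor_def by (intro component_bound_below_first_root) auto
next
  case False
  with assms show ?thesis
    unfolding admissible_residual_factor_def by (intro component_bound_beyond_first_root) auto
qed

lemma sum_residual_bound:
  fixes L :: "real set" and a e :: "real \<Rightarrow> 'a::real_inner" and s c phi :: "real \<Rightarrow> real"
  assumes comp: "\<And>mu. mu \<in> L \<Longrightarrow> admissible_residual_factor (s mu) (c mu) (phi mu)"
    and cross: "(\<Sum>mu\<in>L. 2 * s mu * (1 - s mu) * (phi mu)\<^sup>2 * (norm (a mu + e mu))\<^sup>2) \<ge> 0"
  shows "(\<Sum>mu\<in>L. (norm (((1 - s mu) * phi mu) *\<^sub>R (a mu + e mu) - e mu))\<^sup>2)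
     \<le> 3 * (\<Sum>mu\<in>L. exp (- c mu) * (norm (a mu))\<^sup>2 + min (c mu) 1 * (norm (e mu))\<^sup>2)"
proof -
  have "(\<Sum>mu\<in>L. (norm (((1 - s mu) * phi mu) *\<^sub>R (a mu + e mu) - e mu))\<^sup>2)
      \<le> (\<Sum>mu\<in>L. (norm (((1 - s mu) * phi mu) *\<^sub>R (a mu + e mu) - e mu))\<^sup>2
           + 2 * s mu * (1 - s mu) * (phi mu)\<^sup>2 * (norm (a mu + e mu))\<^sup>2)"
    using cross by (simp add: sum.distrib)
  also have "\<dots> \<le> (\<Sum>mu\<in>L. 3 * (exp (- c mu) * (norm (a mu))\<^sup>2 + min (c mu) 1 * (norm (e mu))\<^sup>2))"
  proof (rule sum_mono)
    fix mu assume "mu \<in> L"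
    have "(norm (((1 - s mu) * phi mu) *\<^sub>R (a mu + e mu) - e mu))\<^sup>2
        + 2 * s mu * (1 - s mu) * (phi mu)\<^sup>2 * (norm (a mu + e mu))\<^sup>2
        \<le> 3 * exp (- c mu) * (norm (a mu))\<^sup>2 + 3 * min (c mu) 1 * (norm (e mu))\<^sup>2"
      using component_bound[OF comp[OF \<open>mu \<in> L\<close>]] .
    then show "(norm (((1 - s mu) * phi mu) *\<^sub>R (a mu + e mu) - e mu))\<^sup>2
        + 2 * s mu * (1 - s mu) * (phi mu)\<^sup>2 * (norm (a mu + e mu))\<^sup>2
        \<le> 3 * (exp (- c mu) * (norm (a mu))\<^sup>2 + min (c mu) 1 * (norm (e mu))\<^sup>2)"
      by (simp add: distrib_left mult.assoc)
  qed
  finally show ?thesis by (simp add: sum_distrib_left)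
qed

lemma sum_shifted_norm_ge:
  fixes L :: "real set" and a g :: "real \<Rightarrow> 'a::real_inner" and c :: "real \<Rightarrow> real"
  assumes "(\<Sum>mu\<in>L. exp (- c mu / 2) * (a mu \<bullet> (g mu - a mu))) \<ge> 0"
  shows "(\<Sum>mu\<in>L. exp (- c mu) * (norm (a mu))\<^sup>2 + (norm (g mu - a mu))\<^sup>2)
     \<le> (\<Sum>mu\<in>L. (norm ((1 - exp (- c mu / 2)) *\<^sub>R a mu - g mu))\<^sup>2)"
proof -
  have "(norm ((1 - exp (- c mu / 2)) *\<^sub>R a mu - g mu))\<^sup>2
      = exp (- c mu) * (norm (a mu))\<^sup>2 + (norm (g mu - a mu))\<^sup>2
        + 2 * (exp (- c mu / 2) * (a mu \<bullet> (g mu - a mu)))" for mu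
  proof -
    have "exp (- c mu / 2) * exp (- c mu / 2) = exp (- c mu)" by (simp add: exp_add[symmetric])
    then show ?thesis unfolding power2_norm_eq_inner
      by (simp add: inner_diff_left inner_diff_right inner_commute algebra_simps)
  qed
  then show ?thesis using assms by (simp add: sum.distrib sum_distrib_left[symmetric])
qed

lemma sum_component_bound:
  fixes L :: "real set" and a e g :: "real \<Rightarrow> 'a::real_inner" and s c phi :: "real \<Rightarrow> real"
  assumes "\<And>mu. mu \<in> L \<Longrightarrow> admissible_residual_factor (s mu) (c mu) (phi mu)"
    and "(\<Sum>mu\<in>L. 2 * s mu * (1 - s mu) * (phi mu)\<^sup>2 * (norm (a mu + e mu))\<^sup>2) \<ge> 0"
    and "(\<Sum>mu\<in>L. exp (- c mu / 2) * (a mu \<bullet> (g mu - a mu))) \<ge> 0"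
  shows "(\<Sum>mu\<in>L. (norm ((1 - (1 - s mu) * phi mu) *\<^sub>R (a mu + e mu) - g mu))\<^sup>2)
     \<le> 4 * (\<Sum>mu\<in>L. (norm ((1 - exp (- c mu / 2)) *\<^sub>R a mu - g mu))\<^sup>2)
       + 4 * (\<Sum>mu\<in>L. min (c mu) 1 * (norm (e mu))\<^sup>2)"
proof -
  define w where "w mu = ((1 - s mu) * phi mu) *\<^sub>R (a mu + e mu) - e mu" for mu
  define d where "d mu = g mu - a mu" for mu
  have "(1 - (1 - s mu) * phi mu) *\<^sub>R (a mu + e mu) - g mu = - (w mu + d mu)" for mu
    unfolding w_def d_def by (simp add: algebra_simps)
  then have "(\<Sum>mu\<in>L. (norm ((1 - (1 - s mu) * phi mu) *\<^sub>R (a mu + e mu) - g mu))\<^sup>2)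
      = (\<Sum>mu\<in>L. (norm (w mu + d mu))\<^sup>2)" by (simp only: norm_minus_cancel)
  also have "\<dots> \<le> (\<Sum>mu\<in>L. 4/3 * (norm (w mu))\<^sup>2 + 4 * (norm (d mu))\<^sup>2)"
    by (intro sum_mono norm_add_squared_le)
  also have "\<dots> = 4/3 * (\<Sum>mu\<in>L. (norm (w mu))\<^sup>2) + 4 * (\<Sum>mu\<in>L. (norm (d mu))\<^sup>2)"
    by (simp add: sum.distrib sum_distrib_left)
  also have "\<dots> \<le> 4 * (\<Sum>mu\<in>L. exp (- c mu) * (norm (a mu))\<^sup>2 + (norm (d mu))\<^sup>2)
      + 4 * (\<Sum>mu\<in>L. min (c mu) 1 * (norm (e mu))\<^sup>2)"
    using sum_residual_bound[OF assms(1,2)] unfolding w_def by (simp add: sum.distrib algebra_simps)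
  also have "\<dots> \<le> 4 * (\<Sum>mu\<in>L. (norm ((1 - exp (- c mu / 2)) *\<^sub>R a mu - g mu))\<^sup>2)
      + 4 * (\<Sum>mu\<in>L. min (c mu) 1 * (norm (e mu))\<^sup>2)"
    using sum_shifted_norm_ge[OF assms(3)] unfolding d_def by simp
  finally show ?thesis .
qed


section \<open>Conjugate gradient residual polynomials\<close>

definition cg_optimal :: "real^'n^'n \<Rightarrow> real^'n \<Rightarrow> nat \<Rightarrow> real poly \<Rightarrow> bool" where
  "cg_optimal A y k P \<longleftrightarrow> degree P \<le> k \<and> poly P 0 = 1 \<and>
      (\<forall>Q. degree Q \<le> k \<and> poly Q 0 = 1 \<longrightarrow> norm (mat_poly P A *v y) \<le> norm (mat_poly Q A *v y))"

lemma R_CG_eq_The_cg_optimal: "R_CG X lam y k = (THE P. cg_optimal (Sig_lam X lam) (y_lam X lam y) k P)"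
  unfolding R_CG_def cg_optimal_def ..

lemma span_image_finite_sum:
  fixes f :: "'i \<Rightarrow> 'a::real_vector"
  assumes "finite I" "x \<in> span (f ` I)"
  obtains c where "x = (\<Sum>i\<in>I. c i *\<^sub>R f i)"
proof -
  have "\<exists>c. x = (\<Sum>i\<in>I. c i *\<^sub>R f i)"
    using assms(2)
  proof (induction rule: span_induct_alt)
    case base
    show ?case by (intro exI[of _ "\<lambda>_. 0"]) simp
  next
    case (step r z x)
    then obtain j c where "j \<in> I" "z = f j" "x = (\<Sum>i\<in>I. c i *\<^sub>R f i)" by blast
    then show ?case using assms(1)
      by (intro exI[of _ "\<lambda>i. c i + (if i = j then r else 0)"])
        (simp add: scaleR_add_left sum.distrib if_distrib[of "\<lambda>t. t *\<^sub>R f _"] cong: if_cong)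
  qed
  then show ?thesis using that by blast
qed

lemma mat_poly_apply_normalized:
  fixes A :: "real^'n^'n"
  assumes "degree Q \<le> k" "poly Q 0 = 1"
  shows "mat_poly Q A *v y = y + (\<Sum>j\<in>{1..k}. coeff Q j *\<^sub>R (mat_pow A j *v y))"
proof -
  have "{..k} = insert 0 {1..k}" by auto
  moreover have "coeff Q 0 = 1" using assms(2) by (simp add: poly_0_coeff_0)
  ultimately show ?thesis
    unfolding mat_poly_apply[OF assms(1)] by (simp add: mat_pow_def)
qed

text \<open>The optimal residual is the component of y orthogonal to the Krylov space spanned by
  A y, ..., A^k y.\<close>

lemma cg_optimal_exists: "\<exists>P. cg_optimal A y k P"
proof -
  define f where "f j = mat_pow A j *v y" for j
  obtain p z where pz: "p \<in> span (f ` {1..k})" "\<And>w. w \<in> span (f ` {1..k}) \<Longrightarrow> orthogonal z w"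
    "y = p + z"
    using orthogonal_subspace_decomp_exists[of "f ` {1..k}" y] by metis
  obtain c where pc: "p = (\<Sum>j\<in>{1..k}. c j *\<^sub>R f j)"
    using span_image_finite_sum[OF _ pz(1)] by blast
  define P where "P = 1 - (\<Sum>j\<in>{1..k}. monom (c j) j)"
  have degP: "degree P \<le> k" unfolding P_def
    by (intro degree_diff_le degree_sum_le) (auto intro: order.trans[OF degree_monom_le])
  have P0: "poly P 0 = 1" unfolding P_def by (simp add: poly_sum poly_monom zero_power)
  have "coeff P j = - c j" if "j \<in> {1..k}" for j
    using that by (simp add: P_def coeff_sum coeff_monom coeff_1 if_distrib cong: if_cong)
  then have Py: "mat_poly P A *v y = z"
    unfolding mat_poly_apply_normalized[OF degP P0] f_def[symmetric] using pz(3) pc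
    by (simp add: sum_negf)
  have "norm z \<le> norm (mat_poly Q A *v y)" if Q: "degree Q \<le> k" "poly Q 0 = 1" for Q
  proof -
    define u where "u = p + (\<Sum>j\<in>{1..k}. coeff Q j *\<^sub>R f j)"
    have "(\<Sum>j\<in>{1..k}. coeff Q j *\<^sub>R f j) \<in> span (f ` {1..k})"
      by (intro span_sum span_scale span_base) auto
    then have "u \<in> span (f ` {1..k})" unfolding u_def using pz(1) by (simp add: span_add)
    then have "z \<bullet> u = 0" using pz(2) by (simp add: orthogonal_def)
    moreover have "mat_poly Q A *v y = z + u"
      unfolding mat_poly_apply_normalized[OF Q] u_def f_def using pz(3) by (simp add: algebra_simps)
    ultimately show ?thesis by (simp add: norm_le power2_norm_eq_inner inner_add_left inner_add_right
        inner_commute)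
  qed
  then show ?thesis unfolding cg_optimal_def using degP P0 Py by metis
qed

definition cg_inner :: "real^'n^'n \<Rightarrow> real^'n \<Rightarrow> real poly \<Rightarrow> real poly \<Rightarrow> real" where
  "cg_inner A y P Q = (\<Sum>mu\<in>eigenvalues A. (norm (eigenproj A mu *v y))\<^sup>2 * mu * poly P mu * poly Q mu)"

lemma cg_inner_interpolate_left:
  "cg_inner A y (smult (1 - a) P0 + smult a P1) Q = (1 - a) * cg_inner A y P0 Q + a * cg_inner A y P1 Q"
  unfolding cg_inner_def sum_distrib_left sum.distrib[symmetric]
  by (intro sum.cong refl) (simp add: algebra_simps)

context sym_matrix
begin

text \<open>First-order optimality: perturbing the optimal residual polynomial by t x q keeps
  degree and normalisation, so the linear term in t must vanish.\<close>

lemma cg_optimal_orthogonal: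
  assumes cg: "cg_optimal A y k P" and "degree q < k"
  shows "cg_inner A y P q = 0"
proof -
  define xq where "xq = [:0, 1:] * q"
  define u where "u = mat_poly P A *v y"
  define v where "v = mat_poly xq A *v y"
  have dP: "degree P \<le> k" and P0: "poly P 0 = 1" using cg unfolding cg_optimal_def by auto
  have dxq: "degree xq \<le> k"
    using assms(2) unfolding xq_def by (cases "q = 0") (simp_all add: degree_mult_eq)
  have "0 \<le> 2 * t * (u \<bullet> v) + t\<^sup>2 * (v \<bullet> v)" for t
  proof -
    have "degree (P + smult t xq) \<le> k" using dP dxq
      by (meson degree_add_le degree_smult_le order.trans)
    moreover have "poly (P + smult t xq) 0 = 1" unfolding xq_def using P0 by simp
    ultimately have "norm u \<le> norm (mat_poly (P + smult t xq) A *v y)"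
      using cg unfolding cg_optimal_def u_def by blast
    also have "mat_poly (P + smult t xq) A *v y = u + t *\<^sub>R v"
      unfolding u_def v_def mat_poly_add mat_poly_smult
      by (simp add: matrix_vector_mult_add_rdistrib scaleR_matrix_vector_assoc)
    finally have "(norm u)\<^sup>2 \<le> (norm (u + t *\<^sub>R v))\<^sup>2" by (simp add: power_mono)
    then show ?thesis unfolding power2_norm_eq_inner
      by (simp add: inner_add_left inner_add_right inner_commute algebra_simps power2_eq_square)
  qed
  then have "u \<bullet> v = 0" by (rule linear_coeff_eq_0_if_quadratic_nonneg)
  then show ?thesis
    unfolding u_def v_def inner_mat_poly_spectral cg_inner_def xq_def by (simp add: mult_ac)
qed

lemma norm_mat_poly_cg_weights:
  "(norm (mat_poly P A *v y))\<^sup>2 = (\<Sum>mu\<in>eigenvalues A. (poly P mu)\<^sup>2 * (norm (eigenproj A mu *v y))\<^sup>2)"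
  using inner_mat_poly_spectral[of P y P] by (simp add: power2_norm_eq_inner[symmetric] power2_eq_square)

end

context sym_matrix
begin

text \<open>Midpoint argument: the average of two optimal polynomials is admissible, and the
  parallelogram law forces the two optimal residuals to coincide.\<close>

lemma cg_optimal_same_residual:
  assumes c1: "cg_optimal A y k P1" and c2: "cg_optimal A y k P2"
  shows "mat_poly P1 A *v y = mat_poly P2 A *v y"
proof -
  define u1 u2 where "u1 = mat_poly P1 A *v y" and "u2 = mat_poly P2 A *v y"
  have d: "degree P1 \<le> k" "poly P1 0 = 1" "degree P2 \<le> k" "poly P2 0 = 1"
    using c1 c2 unfolding cg_optimal_def by auto
  have n12: "norm u1 = norm u2" using c1 c2 d unfolding cg_optimal_def u1_def u2_def
    by (meson order.antisym)
  define M where "M = smult (1/2) (P1 + P2)"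
  have "degree M \<le> k" "poly M 0 = 1" unfolding M_def using d by (simp_all add: degree_add_le)
  moreover have "mat_poly M A *v y = (1/2) *\<^sub>R (u1 + u2)"
    unfolding M_def u1_def u2_def mat_poly_smult mat_poly_add
    by (simp add: matrix_vector_mult_add_rdistrib scaleR_matrix_vector_assoc[symmetric])
  ultimately have "norm u1 \<le> norm (u1 + u2) / 2" using c1 unfolding cg_optimal_def u1_def by fastforce
  then have "(2 * norm u1)\<^sup>2 \<le> (norm (u1 + u2))\<^sup>2" by (intro power_mono) simp_all
  moreover have "(norm (u1 + u2))\<^sup>2 + (norm (u1 - u2))\<^sup>2 = 2 * (norm u1)\<^sup>2 + 2 * (norm u2)\<^sup>2"
    unfolding power2_norm_eq_inner
    by (simp add: inner_add_left inner_add_right inner_diff_left inner_diff_right inner_commute)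
  moreover have "(2 * norm u1)\<^sup>2 = 4 * (norm u1)\<^sup>2" "(norm u2)\<^sup>2 = (norm u1)\<^sup>2"
    using n12 by (simp_all add: power_mult_distrib)
  ultimately have "(norm (u1 - u2))\<^sup>2 \<le> 0" by linarith
  then show ?thesis unfolding u1_def u2_def by simp
qed

end

locale cg_setting = sym_matrix A for A :: "real^'n^'n" +
  fixes y :: "real^'n"
  assumes eigenvalues_pos: "\<And>mu. mu \<in> eigenvalues A \<Longrightarrow> mu > 0"
    and eigenproj_nonzero: "\<And>mu. mu \<in> eigenvalues A \<Longrightarrow> eigenproj A mu *v y \<noteq> 0"
begin

lemma cg_inner_self_nonneg: "cg_inner A y P P \<ge> 0"
  unfolding cg_inner_def
proof (intro sum_nonneg)
  fix mu assume "mu \<in> eigenvalues A"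
  then have "0 \<le> (norm (eigenproj A mu *v y))\<^sup>2 * mu" using eigenvalues_pos by (simp add: less_imp_le)
  then have "0 \<le> ((norm (eigenproj A mu *v y))\<^sup>2 * mu) * (poly P mu * poly P mu)"
    by (rule mult_nonneg_nonneg) simp
  then show "0 \<le> (norm (eigenproj A mu *v y))\<^sup>2 * mu * poly P mu * poly P mu" by (simp add: mult_ac)
qed

text \<open>Below the dimension of the Krylov space, the optimal residual polynomial is unique:
  two of them agree at 0 and at every eigenvalue, more points than their degree.\<close>

lemma cg_optimal_unique:
  assumes k: "k \<le> card (eigenvalues A)" and c1: "cg_optimal A y k P1" and c2: "cg_optimal A y k P2"
  shows "P1 = P2"
proof (rule ccontr)
  assume "P1 \<noteq> P2"
  then have D0: "P1 - P2 \<noteq> 0" by simp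
  have d: "degree P1 \<le> k" "poly P1 0 = 1" "degree P2 \<le> k" "poly P2 0 = 1"
    using c1 c2 unfolding cg_optimal_def by auto
  have "mat_poly (P1 - P2) A *v y = 0"
    using cg_optimal_same_residual[OF c1 c2] by (simp add: mat_poly_diff matrix_vector_mult_diff_rdistrib)
  then have "(\<Sum>mu\<in>eigenvalues A. (poly (P1 - P2) mu)\<^sup>2 * (norm (eigenproj A mu *v y))\<^sup>2) = 0"
    using norm_mat_poly_cg_weights[of "P1 - P2" y] by simp
  then have "\<forall>mu\<in>eigenvalues A. (poly (P1 - P2) mu)\<^sup>2 * (norm (eigenproj A mu *v y))\<^sup>2 = 0"
    by (subst (asm) sum_nonneg_eq_0_iff[OF finite_eigenvalues]) simp_all
  then have "insert 0 (eigenvalues A) \<subseteq> {x. poly (P1 - P2) x = 0}"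
    using d eigenproj_nonzero by auto
  then have "card (insert 0 (eigenvalues A)) \<le> degree (P1 - P2)"
    using card_mono[OF poly_roots_finite[OF D0]] card_poly_roots_bound[OF D0] by (meson order_trans)
  also have "\<dots> \<le> k" using d by (simp add: degree_diff_le)
  finally have "card (insert 0 (eigenvalues A)) \<le> k" .
  moreover have "0 \<notin> eigenvalues A" using eigenvalues_pos by force
  ultimately show False using k finite_eigenvalues by simp
qed

lemma cg_optimal_The:
  assumes "k \<le> card (eigenvalues A)"
  shows "cg_optimal A y k (THE P. cg_optimal A y k P)"
  using cg_optimal_exists cg_optimal_unique[OF assms] by (metis theI)

lemma cg_optimal_root_poly:
  assumes k: "k \<le> card (eigenvalues A)" and cg: "cg_optimal A y k P"
  obtains zs where "length zs = k" "\<forall>z\<in>set zs. z > 0" "P = root_poly zs"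
proof -
  have dP: "degree P \<le> k" and P0: "poly P 0 = 1" using cg unfolding cg_optimal_def by auto
  have "P \<noteq> 0" using P0 by auto
  have "mu > 0 \<and> (norm (eigenproj A mu *v y))\<^sup>2 > 0" if "mu \<in> eigenvalues A" for mu
    using eigenvalues_pos[OF that] eigenproj_nonzero[OF that] by simp
  moreover have "(\<Sum>mu\<in>eigenvalues A. (norm (eigenproj A mu *v y))\<^sup>2 * mu * poly P mu * poly q mu) = 0"
    if "degree q < k" for q
    using cg_optimal_orthogonal[OF cg that] unfolding cg_inner_def .
  ultimately have "k \<le> card (pos_roots P)"
    by (intro card_pos_roots_ge_if_orthogonal[OF finite_eigenvalues _ \<open>P \<noteq> 0\<close> _ k])
  moreover have "pos_roots P \<subseteq> {x. poly P x = 0}" by (auto simp: pos_roots_def)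
  then have "card (pos_roots P) \<le> degree P"
    using card_mono[OF poly_roots_finite[OF \<open>P \<noteq> 0\<close>]] card_poly_roots_bound[OF \<open>P \<noteq> 0\<close>]
    by (meson le_trans)
  ultimately have "degree P = k" "degree P \<le> card (pos_roots P)" using dP by linarith+
  moreover obtain zs where "\<forall>z\<in>set zs. z > 0" "P = root_poly zs"
    using root_poly_if_enough_pos_roots[OF P0] calculation(2) by blast
  ultimately show ?thesis using that degree_root_poly by simp
qed

end

context cg_setting
begin

lemma cg_interpolated_root_poly:
  assumes k1: "Suc k \<le> card (eigenvalues A)" and al: "0 < al" "al \<le> 1"
    and c0: "cg_optimal A y k P0" and c1: "cg_optimal A y (Suc k) P1"
  obtains zs where "length zs = Suc k" "\<forall>z\<in>set zs. z > 0"
    "smult (1 - al) P0 + smult al P1 = root_poly zs"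
proof -
  define Pt where "Pt = smult (1 - al) P0 + smult al P1"
  have k: "k \<le> card (eigenvalues A)" using k1 by simp
  obtain xs0 where xs0: "length xs0 = k" "\<forall>z\<in>set xs0. z > 0" "P0 = root_poly xs0"
    using cg_optimal_root_poly[OF k c0] by blast
  obtain xs1 where xs1: "length xs1 = Suc k" "\<forall>z\<in>set xs1. z > 0" "P1 = root_poly xs1"
    using cg_optimal_root_poly[OF k1 c1] by blast
  note Pt = interpolate_root_polys[OF xs0(1,2) xs1(1,2) al, folded xs0(3) xs1(3), folded Pt_def]
  have "k \<le> card (pos_roots Pt)"
  proof (rule card_pos_roots_ge_if_orthogonal[OF finite_eigenvalues])
    show "mu > 0 \<and> (norm (eigenproj A mu *v y))\<^sup>2 > 0" if "mu \<in> eigenvalues A" for mu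
      using eigenvalues_pos[OF that] eigenproj_nonzero[OF that] by simp
    show "Pt \<noteq> 0" using Pt(1) by auto
    show "(\<Sum>mu\<in>eigenvalues A. (norm (eigenproj A mu *v y))\<^sup>2 * mu * poly Pt mu * poly q mu) = 0"
      if "degree q < k" for q
    proof -
      have "cg_inner A y Pt q = 0"
        using cg_optimal_orthogonal[OF c0 that] cg_optimal_orthogonal[OF c1, of q] that
        unfolding Pt_def cg_inner_interpolate_left by simp
      then show ?thesis unfolding cg_inner_def .
    qed
  qed (rule k)
  then have "degree Pt \<le> card (pos_roots Pt) + 1 \<and> (\<forall>x\<le>0. poly Pt x \<noteq> 0)"
    using Pt(2,3) by simp
  then obtain zs where zs: "\<forall>z\<in>set zs. z > 0" "Pt = root_poly zs"
    using root_poly_if_enough_pos_roots[OF Pt(1)] by blast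
  moreover have "length zs = Suc k" using Pt(2) zs degree_root_poly by simp
  ultimately show ?thesis using that unfolding Pt_def by blast
qed

text \<open>A degree-k root polynomial with positive roots has the same leading sign as the optimal
  polynomial of order k, so modulo lower degrees (to which the latter is orthogonal) it is a
  nonnegative multiple of it.\<close>

lemma cg_inner_optimal_root_poly_nonneg:
  assumes k: "k \<le> card (eigenvalues A)" and c0: "cg_optimal A y k P0"
    and ys: "length ys = k" "\<forall>z\<in>set ys. z > 0"
  shows "cg_inner A y P0 (root_poly ys) \<ge> 0"
proof -
  obtain xs where xs: "length xs = k" "\<forall>z\<in>set xs. z > 0" "P0 = root_poly xs"
    using cg_optimal_root_poly[OF k c0] by blast
  define phi where "phi = root_poly ys"
  have dphi: "degree phi = k" and dP0: "degree P0 = k"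
    using degree_root_poly ys xs unfolding phi_def by simp_all
  have "\<forall>z\<in>set ys. z \<noteq> 0" "\<forall>z\<in>set xs. z \<noteq> 0" using xs(2) ys(2) by auto
  then have "lead_coeff phi = prod_list (map (\<lambda>z. -1/z) ys)"
    "lead_coeff P0 = prod_list (map (\<lambda>z. -1/z) xs)"
    using root_poly_degree_lead_coeff xs(3) unfolding phi_def by blast+
  then have "lead_coeff phi * lead_coeff P0 > 0"
    using lead_coeff_root_poly_same_length[OF ys(2) xs(2)] xs(1) ys(1) by simp
  define c where "c = lead_coeff phi / lead_coeff P0"
  from \<open>lead_coeff phi * lead_coeff P0 > 0\<close> have lP0: "lead_coeff P0 \<noteq> 0" and "c \<ge> 0"
    unfolding c_def by (auto simp: divide_nonneg_pos zero_less_mult_iff divide_nonpos_neg less_imp_le)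
  define D where "D = phi - smult c P0"
  have "degree D < k \<or> D = 0"
  proof -
    have "degree D \<le> k" unfolding D_def using dphi dP0 by (simp add: degree_diff_le)
    moreover have "coeff D k = 0" unfolding D_def c_def using dphi dP0 lP0 by simp
    ultimately show ?thesis by (metis leading_coeff_0_iff le_neq_implies_less)
  qed
  then have "cg_inner A y P0 D = 0"
    using cg_optimal_orthogonal[OF c0] by (auto simp: cg_inner_def)
  then have "cg_inner A y P0 phi = c * cg_inner A y P0 P0"
    unfolding D_def by (simp add: cg_inner_def sum_subtractf sum_distrib_left algebra_simps)
  then show ?thesis using mult_nonneg_nonneg[OF \<open>c \<ge> 0\<close> cg_inner_self_nonneg] unfolding phi_def
    by simp
qed

text \<open>Write R = (1 - x / z) phi with z the smallest root of the interpolated residual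
  polynomial R. The nonnegative inner product of R and phi is what pays for the eigenvalues
  beyond z.\<close>

lemma cg_interpolated_inner_nonneg:
  assumes k1: "Suc k \<le> card (eigenvalues A)" and al: "0 < al" "al \<le> 1"
    and c0: "cg_optimal A y k P0" and c1: "cg_optimal A y (Suc k) P1"
  obtains zs where "zs \<noteq> []" "\<forall>z\<in>set zs. z > 0" "smult (1 - al) P0 + smult al P1 = root_poly zs"
    "cg_inner A y (root_poly zs) (root_poly (remove1 (Min (set zs)) zs)) \<ge> 0"
proof -
  obtain zs where zs: "length zs = Suc k" "\<forall>z\<in>set zs. z > 0"
    "smult (1 - al) P0 + smult al P1 = root_poly zs"
    using cg_interpolated_root_poly[OF assms] by blast
  define ys where "ys = remove1 (Min (set zs)) zs"
  have "zs \<noteq> []" using zs(1) by auto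
  then have "length ys = k" "\<forall>z\<in>set ys. z > 0"
    using zs(1,2) unfolding ys_def by (auto simp: length_remove1 dest: notin_set_remove1)
  then have "cg_inner A y P0 (root_poly ys) \<ge> 0" "cg_inner A y P1 (root_poly ys) = 0"
    using cg_inner_optimal_root_poly_nonneg[OF _ c0] cg_optimal_orthogonal[OF c1] k1
      degree_root_poly by simp_all
  then have "cg_inner A y (root_poly zs) (root_poly ys) \<ge> 0"
    unfolding zs(3)[symmetric] cg_inner_interpolate_left using al by simp
  with zs \<open>zs \<noteq> []\<close> that show ?thesis unfolding ys_def by blast
qed

end

lemma root_poly_split_smallest_root:
  fixes zs :: "real list"
  assumes "zs \<noteq> []"
  defines "z1 \<equiv> Min (set zs)"
  shows "poly (root_poly zs) x = (1 - x / z1) * poly (root_poly (remove1 z1 zs)) x"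
proof -
  have "z1 \<in> set zs" unfolding z1_def using assms by simp
  then show ?thesis unfolding root_poly_remove1[OF \<open>z1 \<in> set zs\<close>] poly_mult by simp
qed

lemma root_poly_split_admissible:
  fixes zs :: "real list" and mu :: real
  assumes zs: "zs \<noteq> []" "\<forall>z\<in>set zs. z > 0" and mu: "mu > 0"
  defines "z1 \<equiv> Min (set zs)"
  shows "admissible_residual_factor (mu / z1) (sum_list (map (\<lambda>z. 1/z) zs) * mu)
           (poly (root_poly (remove1 z1 zs)) mu)"
proof -
  define ys where "ys = remove1 z1 zs"
  define s c phi where "s = mu / z1" and "c = sum_list (map (\<lambda>z. 1/z) zs) * mu"
    and "phi = poly (root_poly ys) mu"
  have z1: "z1 \<in> set zs" "z1 > 0" "\<And>z. z \<in> set zs \<Longrightarrow> z1 \<le> z"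
    using zs unfolding z1_def by auto
  have ys_pos: "\<forall>z\<in>set ys. z > 0" using zs(2) notin_set_remove1 unfolding ys_def by metis
  have rest: "c - s = sum_list (map (\<lambda>z. mu / z) ys)"
    unfolding c_def s_def ys_def sum_list_map_remove1[OF z1(1)]
    by (simp add: algebra_simps sum_list_const_mult[symmetric] o_def)
  moreover have "sum_list (map (\<lambda>z. mu / z) ys) \<ge> 0" using ys_pos mu by (intro sum_list_nonneg) auto
  ultimately have "0 \<le> s" "s \<le> c" using mu z1 unfolding s_def by simp_all
  moreover have "0 \<le> phi \<and> 1 - (c - s) \<le> phi \<and> phi \<le> exp (- (c - s))" if "s < 1"
  proof -
    have "mu < z1" using that z1 unfolding s_def by (simp add: divide_less_eq)
    then have "\<forall>b\<in>set (map (\<lambda>z. mu / z) ys). 0 \<le> b \<and> b \<le> 1"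
      using mu z1 ys_pos set_remove1_subset[of z1 zs] unfolding ys_def
      by (force simp: divide_le_eq)
    moreover have "phi = prod_list (map (\<lambda>b. 1 - b) (map (\<lambda>z. mu / z) ys))"
      unfolding phi_def poly_root_poly by (simp add: o_def)
    ultimately show ?thesis unfolding rest using prod_one_minus_bounds by presburger
  qed
  ultimately show ?thesis unfolding admissible_residual_factor_def s_def c_def phi_def ys_def by auto
qed
context cg_setting
begin

text \<open>Each spectral component satisfies the hypotheses of the scalar estimate with s = mu / z
  and phi the remaining factors; the cross terms add up to 2 / z times the inner product of R
  and phi.\<close>

lemma cg_residual_spectral_bound:
  fixes av ev :: "real^'n" and g :: "real \<Rightarrow> real^'n"
  assumes zs: "zs \<noteq> []" "\<forall>z\<in>set zs. z > 0"
    and ip: "cg_inner A y (root_poly zs) (root_poly (remove1 (Min (set zs)) zs)) \<ge> 0"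
    and rho: "rho = sum_list (map (\<lambda>z. 1/z) zs)"
    and y: "y = av + ev"
    and cond: "(\<Sum>mu\<in>eigenvalues A. exp (- (rho * mu) / 2) *
                 ((eigenproj A mu *v av) \<bullet> (g mu - eigenproj A mu *v av))) \<ge> 0"
  shows "(\<Sum>mu\<in>eigenvalues A. (norm ((1 - poly (root_poly zs) mu) *\<^sub>R (eigenproj A mu *v y) - g mu))\<^sup>2)
     \<le> 4 * (\<Sum>mu\<in>eigenvalues A.
              (norm ((1 - exp (- (rho * mu) / 2)) *\<^sub>R (eigenproj A mu *v av) - g mu))\<^sup>2)
       + 4 * (\<Sum>mu\<in>eigenvalues A. min (rho * mu) 1 * (norm (eigenproj A mu *v ev))\<^sup>2)"
proof -
  define z1 where "z1 = Min (set zs)"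
  define s where "s mu = mu / z1" for mu
  define phi where "phi mu = poly (root_poly (remove1 z1 zs)) mu" for mu
  define a e where "a mu = eigenproj A mu *v av" and "e mu = eigenproj A mu *v ev" for mu
  have R: "poly (root_poly zs) mu = (1 - s mu) * phi mu" for mu
    unfolding s_def phi_def z1_def using root_poly_split_smallest_root[OF zs(1)] .
  have y_split: "eigenproj A mu *v y = a mu + e mu" for mu
    unfolding a_def e_def y by (simp add: matrix_vector_right_distrib)
  have "z1 > 0" using zs unfolding z1_def by simp
  have "(\<Sum>mu\<in>eigenvalues A. 2 * s mu * (1 - s mu) * (phi mu)\<^sup>2 * (norm (a mu + e mu))\<^sup>2)
      = (2 / z1) * cg_inner A y (root_poly zs) (root_poly (remove1 z1 zs))"
    unfolding cg_inner_def sum_distrib_left R y_split[symmetric]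
    by (intro sum.cong refl) (simp add: s_def phi_def power2_eq_square)
  also have "\<dots> \<ge> 0" using ip \<open>z1 > 0\<close> unfolding z1_def by simp
  finally have cross: "(\<Sum>mu\<in>eigenvalues A. 2 * s mu * (1 - s mu) * (phi mu)\<^sup>2 * (norm (a mu + e mu))\<^sup>2) \<ge> 0" .
  have "admissible_residual_factor (s mu) (rho * mu) (phi mu)" if "mu \<in> eigenvalues A" for mu
    using root_poly_split_admissible[OF zs eigenvalues_pos[OF that]]
    unfolding s_def phi_def z1_def rho .
  from sum_component_bound[OF this cross, of g] cond
  show ?thesis unfolding R y_split a_def e_def by simp
qed

end

context cg_setting
begin

lemma mat_fun_sqrt_inverse_sqrt: "mat_fun sqrt A ** mat_fun (\<lambda>x. 1 / sqrt x) A = mat 1"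
  unfolding mat_fun_mult mat_fun_one[symmetric]
proof (rule mat_fun_cong)
  fix x assume "x \<in> eigenvalues A"
  then show "sqrt x * (1 / sqrt x) = 1" using eigenvalues_pos by force
qed

lemma norm_sqrt_cg_error_spectral:
  "(norm (mat_fun sqrt A *v (mat_fun (\<lambda>x. 1 / sqrt x) A *v ((mat 1 - mat_poly R A) *v y) - gamma)))\<^sup>2
   = (\<Sum>mu\<in>eigenvalues A.
        (norm ((1 - poly R mu) *\<^sub>R (eigenproj A mu *v y) - eigenproj A mu *v (mat_fun sqrt A *v gamma)))\<^sup>2)"
proof -
  have "mat_fun sqrt A *v (mat_fun (\<lambda>x. 1 / sqrt x) A *v ((mat 1 - mat_poly R A) *v y) - gamma)
      = (mat 1 - mat_poly R A) *v y - mat_fun sqrt A *v gamma"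
    by (simp add: matrix_vector_mult_diff_distrib matrix_vector_mul_assoc matrix_mul_assoc
        mat_fun_sqrt_inverse_sqrt)
  then show ?thesis unfolding norm_spectral[of "mat_fun sqrt A *v _"]
    by (simp add: matrix_vector_mult_diff_distrib matrix_vector_mult_diff_rdistrib eigenproj_mat_poly
        scaleR_diff_left)
qed

lemma norm_sqrt_shrinkage_spectral:
  "(norm (mat_fun sqrt A *v (beta - mat_fun f A *v beta - gamma)))\<^sup>2
   = (\<Sum>mu\<in>eigenvalues A. (norm ((1 - f mu) *\<^sub>R (eigenproj A mu *v (mat_fun sqrt A *v beta))
        - eigenproj A mu *v (mat_fun sqrt A *v gamma)))\<^sup>2)"
  unfolding norm_spectral[of "mat_fun sqrt A *v _"]
  by (simp add: matrix_vector_mult_diff_distrib mat_fun_commute[of sqrt f] eigenproj_mat_fun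
      scaleR_diff_left left_diff_distrib)

lemma norm_sqrt_min_spectral:
  assumes "rho \<ge> 0"
  shows "(norm (mat_fun (\<lambda>x. sqrt (min (rho * x) 1)) A *v e))\<^sup>2
    = (\<Sum>mu\<in>eigenvalues A. min (rho * mu) 1 * (norm (eigenproj A mu *v e))\<^sup>2)"
  unfolding norm_mat_fun_spectral
proof (intro sum.cong refl)
  fix mu assume "mu \<in> eigenvalues A"
  then have "0 \<le> rho * mu" using assms eigenvalues_pos by (simp add: less_imp_le)
  then show "(sqrt (min (rho * mu) 1))\<^sup>2 * (norm (eigenproj A mu *v e))\<^sup>2
      = min (rho * mu) 1 * (norm (eigenproj A mu *v e))\<^sup>2" by simp
qed

lemma shrinkage_condition_spectral:
  "((A ** mat_fun f A) *v beta) \<bullet> (gamma - beta)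
   = (\<Sum>mu\<in>eigenvalues A. f mu * ((eigenproj A mu *v (mat_fun sqrt A *v beta))
        \<bullet> (eigenproj A mu *v (mat_fun sqrt A *v gamma) - eigenproj A mu *v (mat_fun sqrt A *v beta))))"
  unfolding inner_spectral[of "(A ** mat_fun f A) *v beta"]
proof (intro sum.cong refl)
  fix mu assume "mu \<in> eigenvalues A"
  then have "mu > 0" by (rule eigenvalues_pos)
  then have sqrt_sqrt: "sqrt mu * (sqrt mu * z) = mu * z" for z by (simp add: mult.assoc[symmetric])
  show "(eigenproj A mu *v ((A ** mat_fun f A) *v beta)) \<bullet> (eigenproj A mu *v (gamma - beta))
      = f mu * ((eigenproj A mu *v (mat_fun sqrt A *v beta))
        \<bullet> (eigenproj A mu *v (mat_fun sqrt A *v gamma) - eigenproj A mu *v (mat_fun sqrt A *v beta)))"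
    by (simp add: matrix_vector_mul_assoc[symmetric] eigenproj_matrix eigenproj_mat_fun
        matrix_vector_mult_diff_distrib inner_diff_right algebra_simps sqrt_sqrt)
qed

lemma cg_oracle_inequality:
  fixes beta gamma ev :: "real^'n" and R :: "real poly" and rho :: real
  assumes R: "R = 1 \<and> rho = 0 \<or>
      (\<exists>zs. zs \<noteq> [] \<and> (\<forall>z\<in>set zs. z > 0) \<and> R = root_poly zs \<and> rho = sum_list (map (\<lambda>z. 1/z) zs)
         \<and> cg_inner A y (root_poly zs) (root_poly (remove1 (Min (set zs)) zs)) \<ge> 0)"
    and y: "y = mat_fun sqrt A *v beta + ev"
    and cond: "((A ** mat_fun (\<lambda>x. exp (- rho * x / 2)) A) *v beta) \<bullet> (gamma - beta) \<ge> 0"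
  shows "(norm (mat_fun sqrt A *v (mat_fun (\<lambda>x. 1 / sqrt x) A *v ((mat 1 - mat_poly R A) *v y) - gamma)))\<^sup>2
     \<le> 4 * (norm (mat_fun sqrt A *v (beta - mat_fun (\<lambda>x. exp (- rho * x / 2)) A *v beta - gamma)))\<^sup>2
       + 4 * (norm (mat_fun (\<lambda>x. sqrt (min (rho * x) 1)) A *v ev))\<^sup>2"
proof -
  define a g where "a mu = eigenproj A mu *v (mat_fun sqrt A *v beta)"
    and "g mu = eigenproj A mu *v (mat_fun sqrt A *v gamma)" for mu
  have rho: "rho \<ge> 0" using R by (auto simp: less_imp_le intro!: sum_list_nonneg)
  have "(\<Sum>mu\<in>eigenvalues A. (norm ((1 - poly R mu) *\<^sub>R (eigenproj A mu *v y) - g mu))\<^sup>2)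
      \<le> 4 * (\<Sum>mu\<in>eigenvalues A. (norm ((1 - exp (- rho * mu / 2)) *\<^sub>R a mu - g mu))\<^sup>2)
        + 4 * (\<Sum>mu\<in>eigenvalues A. min (rho * mu) 1 * (norm (eigenproj A mu *v ev))\<^sup>2)"
    using R
  proof
    assume "R = 1 \<and> rho = 0"
    then show ?thesis by (simp add: sum_distrib_left[symmetric] sum_nonneg)
  next
    assume "\<exists>zs. zs \<noteq> [] \<and> (\<forall>z\<in>set zs. z > 0) \<and> R = root_poly zs \<and> rho = sum_list (map (\<lambda>z. 1/z) zs)
         \<and> cg_inner A y (root_poly zs) (root_poly (remove1 (Min (set zs)) zs)) \<ge> 0"
    then obtain zs where zs: "zs \<noteq> []" "\<forall>z\<in>set zs. z > 0" "R = root_poly zs"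
      "rho = sum_list (map (\<lambda>z. 1/z) zs)"
      "cg_inner A y (root_poly zs) (root_poly (remove1 (Min (set zs)) zs)) \<ge> 0" by blast
    have "(\<Sum>mu\<in>eigenvalues A. exp (- (rho * mu) / 2) * (a mu \<bullet> (g mu - a mu))) \<ge> 0"
      using cond unfolding shrinkage_condition_spectral a_def g_def by simp
    from cg_residual_spectral_bound[OF zs(1,2,5,4) y[folded a_def] this[unfolded a_def]]
    show ?thesis unfolding zs(3) a_def by simp
  qed
  then show ?thesis
    unfolding norm_sqrt_cg_error_spectral norm_sqrt_shrinkage_spectral norm_sqrt_min_spectral[OF rho]
      a_def g_def .
qed

end


section \<open>Ridge-regularised conjugate gradients\<close>

lemma sym_matrix_Sig_lam: "sym_matrix (Sig_lam X lam)"
proof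
  have "transpose (Sig_hat X) = Sig_hat X"
    unfolding Sig_hat_def by (simp add: transpose_scalar matrix_transpose_mul)
  then show "transpose (Sig_lam X lam) = Sig_lam X lam"
    unfolding Sig_lam_def by (auto simp: transpose_def vec_eq_iff mat_def)
qed

lemma Sig_lam_apply: "Sig_lam X lam *v v = Sig_hat X *v v + lam *\<^sub>R v"
  unfolding Sig_lam_def by (simp add: matrix_vector_mult_add_rdistrib scaleR_matrix_vector_assoc[symmetric])

lemma eigenvalues_Sig_lam: "mu \<in> eigenvalues (Sig_lam X lam) \<longleftrightarrow> mu - lam \<in> eigenvalues (Sig_hat X)"
  unfolding eigenvalues_def Sig_lam_apply by (simp add: algebra_simps scaleR_diff_left eq_diff_eq)

lemma inner_Sig_hat:
  fixes X :: "real^'p^'n"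
  shows "v \<bullet> (Sig_hat X *v v) = (norm (X *v v))\<^sup>2 / real CARD('n)"
proof -
  have "v \<bullet> (Sig_hat X *v v) = (X *v v) \<bullet> (X *v v) / real CARD('n)"
    unfolding Sig_hat_def
    by (simp add: scaleR_matrix_vector_assoc[symmetric] matrix_vector_mul_assoc[symmetric]
        dot_lmul_matrix[symmetric] transpose_matrix_vector inner_commute)
  then show ?thesis by (simp add: power2_norm_eq_inner)
qed

text \<open>An eigenvector of the empirical covariance with eigenvalue 0 lies in the kernel of X,
  hence is orthogonal to the range of its transpose.\<close>

lemma eigenvalues_Sig_hat_pos:
  fixes X :: "real^'p^'n" and y :: "real^'n"
  assumes proj: "\<forall>mu \<in> eigenvalues (Sig_hat X).
          \<exists>v. Sig_hat X *v v = mu *\<^sub>R v \<and> v \<bullet> (transpose X *v y) \<noteq> 0"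
    and mu: "mu \<in> eigenvalues (Sig_hat X)"
  shows "mu > 0"
proof -
  obtain v where v: "v \<noteq> 0" "Sig_hat X *v v = mu *\<^sub>R v" using mu unfolding eigenvalues_def by auto
  have "mu * (v \<bullet> v) \<ge> 0" using inner_Sig_hat[of v X] v(2) by simp
  moreover have "v \<bullet> v > 0" using v(1) by simp
  ultimately have "mu \<ge> 0" by (smt (verit) mult_neg_pos)
  moreover have "mu \<noteq> 0"
  proof
    assume "mu = 0"
    then obtain u where u: "Sig_hat X *v u = 0" "u \<bullet> (transpose X *v y) \<noteq> 0" using proj mu by auto
    have "X *v u = 0" using inner_Sig_hat[of u X] u(1) by simp
    moreover have "u \<bullet> (transpose X *v y) = y \<bullet> (X *v u)"
      by (simp add: transpose_matrix_vector dot_lmul_matrix[symmetric] inner_commute)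
    ultimately show False using u(2) by simp
  qed
  ultimately show ?thesis by simp
qed

lemma cg_setting_ridge:
  fixes X :: "real^'p^'n" and y :: "real^'n"
  assumes lam: "lam \<ge> 0"
    and proj: "\<forall>mu \<in> eigenvalues (Sig_hat X).
          \<exists>v. Sig_hat X *v v = mu *\<^sub>R v \<and> v \<bullet> (transpose X *v y) \<noteq> 0"
  shows "cg_setting (Sig_lam X lam) (y_lam X lam y)"
    and "\<And>mu. mu \<in> eigenvalues (Sig_lam X lam) \<Longrightarrow> mu > lam"
proof -
  interpret S: sym_matrix "Sig_lam X lam" by (rule sym_matrix_Sig_lam)
  show gt: "mu > lam" if "mu \<in> eigenvalues (Sig_lam X lam)" for mu
    using eigenvalues_Sig_hat_pos[OF proj] that eigenvalues_Sig_lam by force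
  show "cg_setting (Sig_lam X lam) (y_lam X lam y)"
  proof
    fix mu assume mu: "mu \<in> eigenvalues (Sig_lam X lam)"
    show "mu > 0" using gt[OF mu] lam by simp
    obtain v where v: "Sig_hat X *v v = (mu - lam) *\<^sub>R v" "v \<bullet> (transpose X *v y) \<noteq> 0"
      using proj mu eigenvalues_Sig_lam by blast
    have "Sig_lam X lam *v v = mu *\<^sub>R v" unfolding Sig_lam_apply v(1) by (simp add: algebra_simps)
    then have "eigenproj (Sig_lam X lam) mu *v v = v" using S.eigenproj_eigenvector[of v mu mu] by simp
    then have "v \<bullet> (eigenproj (Sig_lam X lam) mu *v (transpose X *v y)) \<noteq> 0"
      using v(2) S.eigenproj_inner_swap[of mu v "transpose X *v y"] by simp
    moreover have "eigenproj (Sig_lam X lam) mu *v y_lam X lam y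
        = (1 / real CARD('n) * (1 / sqrt mu)) *\<^sub>R (eigenproj (Sig_lam X lam) mu *v (transpose X *v y))"
      unfolding y_lam_def by (simp add: matrix_vector_mult_scaleR S.eigenproj_mat_fun)
    ultimately show "eigenproj (Sig_lam X lam) mu *v y_lam X lam y \<noteq> 0"
      using gt[OF mu] lam by auto
  qed
qed

lemma Sig_lam_eq_mat_fun: "Sig_lam X lam' = mat_fun (\<lambda>x. x + (lam' - lam)) (Sig_lam X lam)"
proof -
  interpret S: sym_matrix "Sig_lam X lam" by (rule sym_matrix_Sig_lam)
  show ?thesis unfolding S.mat_fun_add S.mat_fun_id S.mat_fun_const
    by (simp add: Sig_lam_def algebra_simps)
qed

lemma beta_lam_spectral:
  assumes "\<And>mu. mu \<in> eigenvalues (Sig_lam X lam) \<Longrightarrow> mu + (lam' - lam) \<noteq> 0"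
  shows "beta_lam X lam' b0 = mat_fun (\<lambda>x. 1 / (x + (lam' - lam))) (Sig_lam X lam) *v (Sig_hat X *v b0)"
proof -
  interpret S: sym_matrix "Sig_lam X lam" by (rule sym_matrix_Sig_lam)
  have "matrix_inv (Sig_lam X lam') = mat_fun (\<lambda>x. 1 / (x + (lam' - lam))) (Sig_lam X lam)"
    unfolding Sig_lam_eq_mat_fun[of X lam' lam] by (rule S.mat_fun_inverse) (rule assms)
  then show ?thesis unfolding beta_lam_def by (simp add: matrix_vector_mul_assoc)
qed

lemma y_lam_model_split:
  fixes X :: "real^'p^'n"
  assumes model: "y = X *v b0 + eps"
    and pos: "\<And>mu. mu \<in> eigenvalues (Sig_lam X lam) \<Longrightarrow> mu > 0"
  shows "y_lam X lam y = mat_fun sqrt (Sig_lam X lam) *v beta_lam X lam b0 + y_lam X lam eps"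
proof -
  interpret S: sym_matrix "Sig_lam X lam" by (rule sym_matrix_Sig_lam)
  have "mat_fun sqrt (Sig_lam X lam) *v beta_lam X lam b0
      = mat_fun (\<lambda>x. 1 / sqrt x) (Sig_lam X lam) *v (Sig_hat X *v b0)"
  proof -
    have "mat_fun sqrt (Sig_lam X lam) ** mat_fun (\<lambda>x. 1 / x) (Sig_lam X lam)
        = mat_fun (\<lambda>x. 1 / sqrt x) (Sig_lam X lam)"
      unfolding S.mat_fun_mult
    proof (rule S.mat_fun_cong)
      fix x assume "x \<in> eigenvalues (Sig_lam X lam)"
      then have "x > 0" by (rule pos)
      then show "sqrt x * (1 / x) = 1 / sqrt x" by (simp add: field_simps)
    qed
    then show ?thesis using beta_lam_spectral[of X lam lam b0] pos
      by (simp add: matrix_vector_mul_assoc matrix_mul_assoc less_imp_neq[symmetric])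
  qed
  moreover have "transpose X *v y = real CARD('n) *\<^sub>R (Sig_hat X *v b0) + transpose X *v eps"
    unfolding model Sig_hat_def
    by (simp add: matrix_vector_right_distrib matrix_vector_mul_assoc scaleR_matrix_vector_assoc[symmetric])
  ultimately show ?thesis unfolding y_lam_def
    by (simp add: matrix_vector_right_distrib matrix_vector_mult_scaleR scaleR_add_right)
qed

lemma ceiling_interpolation_index:
  fixes t :: real
  assumes "0 < t" "t \<le> real N"
  defines "k \<equiv> nat (\<lceil>t\<rceil> - 1)"
  shows "Suc k \<le> N" "0 < t - real k" "t - real k \<le> 1"
proof -
  have "\<lceil>t\<rceil> \<ge> 1" using assms(1) by (simp add: one_le_ceiling zero_less_ceiling)
  then have k: "real k = of_int \<lceil>t\<rceil> - 1" unfolding k_def by simp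
  show "0 < t - real k" "t - real k \<le> 1" unfolding k using ceiling_correct[of t] by linarith+
  have "\<lceil>t\<rceil> \<le> int N" using assms(2) by (simp add: ceiling_le_iff)
  then show "Suc k \<le> N" unfolding k_def using \<open>\<lceil>t\<rceil> \<ge> 1\<close> by linarith
qed

context cg_setting
begin

lemma cg_optimal_order_0: "(THE P. cg_optimal A y 0 P) = 1"
proof -
  have "cg_optimal A y 0 (THE P. cg_optimal A y 0 P)" by (rule cg_optimal_The) simp
  then have "degree (THE P. cg_optimal A y 0 P) = 0" "poly (THE P. cg_optimal A y 0 P) 0 = 1"
    unfolding cg_optimal_def by auto
  then show ?thesis by (metis degree_eq_zeroE one_pCons poly_pCons mult_zero_left add.right_neutral)
qed

end

lemma R_CG_t_cases:
  fixes X :: "real^'p^'n" and y :: "real^'n" and t :: real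
  assumes cg: "cg_setting (Sig_lam X lam) (y_lam X lam y)"
    and t: "0 \<le> t" "t \<le> real (card (eigenvalues (Sig_lam X lam)))"
  defines "R \<equiv> R_CG_t X lam y t"
  defines "rho \<equiv> \<bar>poly (pderiv R) 0\<bar>"
  shows "R = 1 \<and> rho = 0 \<or>
    (\<exists>zs. zs \<noteq> [] \<and> (\<forall>z\<in>set zs. z > 0) \<and> R = root_poly zs \<and> rho = sum_list (map (\<lambda>z. 1/z) zs)
       \<and> cg_inner (Sig_lam X lam) (y_lam X lam y) (root_poly zs) (root_poly (remove1 (Min (set zs)) zs)) \<ge> 0)"
proof (cases "t \<le> 0")
  case True
  then show ?thesis using cg_setting.cg_optimal_order_0[OF cg]
    unfolding rho_def R_def R_CG_t_def R_CG_eq_The_cg_optimal by simp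
next
  case False
  define k where "k = nat (\<lceil>t\<rceil> - 1)"
  note idx = ceiling_interpolation_index[of t, folded k_def, OF _ t(2)]
  have R: "R = smult (1 - (t - real k)) (R_CG X lam y k) + smult (t - real k) (R_CG X lam y (Suc k))"
    unfolding R_def R_CG_t_def k_def using False by (simp add: Let_def)
  obtain zs where zs: "zs \<noteq> []" "\<forall>z\<in>set zs. z > 0" "R = root_poly zs"
    "cg_inner (Sig_lam X lam) (y_lam X lam y) (root_poly zs) (root_poly (remove1 (Min (set zs)) zs)) \<ge> 0"
    using cg_setting.cg_interpolated_inner_nonneg[OF cg idx
        cg_setting.cg_optimal_The[OF cg] cg_setting.cg_optimal_The[OF cg idx(1)]] False idx(1)
    unfolding R R_CG_eq_The_cg_optimal by force
  moreover have "sum_list (map (\<lambda>z. 1/z) zs) \<ge> 0" using zs(2) by (intro sum_list_nonneg) auto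
  then have "rho = sum_list (map (\<lambda>z. 1/z) zs)" unfolding rho_def zs(3) pderiv_root_poly_0 by simp
  ultimately show ?thesis by blast
qed

lemma ridge_condition_smaller_penalty:
  fixes X :: "real^'p^'n" and y :: "real^'n"
  assumes lam: "lam \<ge> 0"
    and proj: "\<forall>mu \<in> eigenvalues (Sig_hat X).
          \<exists>v. Sig_hat X *v v = mu *\<^sub>R v \<and> v \<bullet> (transpose X *v y) \<noteq> 0"
    and lam': "0 \<le> lam'" "lam' \<le> lam"
  shows "((Sig_lam X lam ** mat_fun (\<lambda>x. exp (- rho * x / 2)) (Sig_lam X lam)) *v beta_lam X lam b0)
           \<bullet> (beta_lam X lam' b0 - beta_lam X lam b0) \<ge> 0"
proof -
  let ?S = "Sig_lam X lam" and ?b = "Sig_hat X *v b0"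
  interpret S: sym_matrix ?S by (rule sym_matrix_Sig_lam)
  have gt: "mu > lam" if "mu \<in> eigenvalues ?S" for mu
    using cg_setting_ridge(2)[OF lam proj that] .
  have beta: "beta_lam X l b0 = mat_fun (\<lambda>x. 1 / (x + (l - lam))) ?S *v ?b" if "0 \<le> l" for l
    using gt that by (intro beta_lam_spectral) (smt (verit))
  have "((?S ** mat_fun (\<lambda>x. exp (- rho * x / 2)) ?S) *v beta_lam X lam b0)
           \<bullet> (beta_lam X lam' b0 - beta_lam X lam b0)
      = (\<Sum>mu\<in>eigenvalues ?S. (exp (- rho * mu / 2) * (1 / (mu + (lam' - lam)) - 1 / mu))
          * (norm (eigenproj ?S mu *v ?b))\<^sup>2)"
    unfolding S.inner_spectral[of "(?S ** _) *v _"] beta[OF lam'(1)] beta[OF lam]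
  proof (intro sum.cong refl)
    fix mu assume "mu \<in> eigenvalues ?S"
    then have "mu \<noteq> 0" using gt lam by force
    then show "(eigenproj ?S mu *v ((?S ** mat_fun (\<lambda>x. exp (- rho * x / 2)) ?S)
          *v (mat_fun (\<lambda>x. 1 / (x + (lam - lam))) ?S *v ?b)))
        \<bullet> (eigenproj ?S mu *v (mat_fun (\<lambda>x. 1 / (x + (lam' - lam))) ?S *v ?b
          - mat_fun (\<lambda>x. 1 / (x + (lam - lam))) ?S *v ?b))
        = (exp (- rho * mu / 2) * (1 / (mu + (lam' - lam)) - 1 / mu)) * (norm (eigenproj ?S mu *v ?b))\<^sup>2"
      by (simp add: matrix_vector_mul_assoc[symmetric] S.eigenproj_matrix S.eigenproj_mat_fun
          matrix_vector_mult_diff_distrib inner_diff_right power2_norm_eq_inner algebra_simps)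
  qed
  also have "\<dots> \<ge> 0"
  proof (rule sum_nonneg)
    fix mu assume "mu \<in> eigenvalues ?S"
    then have "0 < mu + (lam' - lam)" "mu + (lam' - lam) \<le> mu" using gt[of mu] lam' by linarith+
    then have "1 / mu \<le> 1 / (mu + (lam' - lam))" by (intro divide_left_mono) simp_all
    then show "0 \<le> (exp (- rho * mu / 2) * (1 / (mu + (lam' - lam)) - 1 / mu))
        * (norm (eigenproj ?S mu *v ?b))\<^sup>2" by simp
  qed
  finally show ?thesis .
qed

lemma cg_ridge_error_bound:
  fixes X :: "real^'p^'n" and y eps :: "real^'n" and b0 gamma :: "real^'p"
  assumes model: "y = X *v b0 + eps" and lam: "lam \<ge> 0"
    and proj: "\<forall>mu \<in> eigenvalues (Sig_hat X).
          \<exists>v. Sig_hat X *v v = mu *\<^sub>R v \<and> v \<bullet> (transpose X *v y) \<noteq> 0"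
    and t: "0 \<le> t" "t \<le> real (card (eigenvalues (Sig_lam X lam)))"
  defines "S \<equiv> Sig_lam X lam" and "rho \<equiv> \<bar>poly (pderiv (R_CG_t X lam y t)) 0\<bar>"
  assumes cond: "((S ** mat_fun (\<lambda>x. exp (- rho * x / 2)) S) *v beta_lam X lam b0)
           \<bullet> (gamma - beta_lam X lam b0) \<ge> 0"
  shows "(norm (mat_fun sqrt S *v (beta_CG X lam y t - gamma)))\<^sup>2
          \<le> 4 * (norm (mat_fun sqrt S *v
                 (beta_lam X lam b0 - (mat_fun (\<lambda>x. exp (- rho * x / 2)) S *v beta_lam X lam b0)
                  - gamma)))\<^sup>2
           + 4 * (norm (mat_fun (\<lambda>x. sqrt (min (rho * x) 1)) S *v y_lam X lam eps))\<^sup>2"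
proof -
  have cg: "cg_setting S (y_lam X lam y)" unfolding S_def by (rule cg_setting_ridge(1)[OF lam proj])
  then interpret cg_setting S "y_lam X lam y" .
  have y: "y_lam X lam y = mat_fun sqrt S *v beta_lam X lam b0 + y_lam X lam eps"
    using y_lam_model_split[OF model] eigenvalues_pos unfolding S_def by blast
  show ?thesis
    using cg_oracle_inequality[OF R_CG_t_cases[OF cg[unfolded S_def] t, folded S_def rho_def] y cond]
    unfolding beta_CG_def S_def[symmetric] .
qed

theorem proposition3p5:
  fixes X :: "real^'p^'n" and y eps :: "real^'n" and b0 :: "real^'p"
    and lam t :: real
  assumes model: "y = X *v b0 + eps"
    and lam_nonneg: "lam \<ge> 0"
    and proj_nonzero: "\<forall>mu \<in> eigenvalues (Sig_hat X).
          \<exists>v. Sig_hat X *v v = mu *\<^sub>R v \<and> v \<bullet> (transpose X *v y) \<noteq> 0"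
    and t_range: "0 \<le> t" "t \<le> real (card (eigenvalues (Sig_lam X lam)))"
  defines "S \<equiv> Sig_lam X lam"
    and "rho \<equiv> \<bar>poly (pderiv (R_CG_t X lam y t)) 0\<bar>"
  shows
    "(\<forall>gamma :: real^'p.
        ((S ** mat_fun (\<lambda>x. exp (- rho * x / 2)) S) *v beta_lam X lam b0)
           \<bullet> (gamma - beta_lam X lam b0) \<ge> 0 \<longrightarrow>
        (norm (mat_fun sqrt S *v (beta_CG X lam y t - gamma)))\<^sup>2
          \<le> 4 * (norm (mat_fun sqrt S *v
                 (beta_lam X lam b0 - (mat_fun (\<lambda>x. exp (- rho * x / 2)) S *v beta_lam X lam b0)
                  - gamma)))\<^sup>2
           + 4 * (norm (mat_fun (\<lambda>x. sqrt (min (rho * x) 1)) S *v y_lam X lam eps))\<^sup>2)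
     \<and> (\<forall>lam'. 0 \<le> lam' \<and> lam' \<le> lam \<longrightarrow>
        ((S ** mat_fun (\<lambda>x. exp (- rho * x / 2)) S) *v beta_lam X lam b0)
           \<bullet> (beta_lam X lam' b0 - beta_lam X lam b0) \<ge> 0)"
  using cg_ridge_error_bound[OF model lam_nonneg proj_nonzero t_range]
    ridge_condition_smaller_penalty[OF lam_nonneg proj_nonzero]
  unfolding S_def rho_def by blast

end
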